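(* Let $S$ be a 1-safe net system and $\pi=(O,h)$, $O=(C,E,G)$, its complete prefix unfolding. Let $t_1,t_2$ be transitions of $S$. Then ($t_1<_{tar}t_2$ and $t_1\bullet\cap\bullet t_2=\emptyset$) if and only if there exist $e_1,e_2\in E$ with $e_1$ co $e_2$, $h(e_1)=t_1$ and $h(e_2)=t_2$.
   Context: Petri net $N=(P,T,F)$ with pre/post-sets $\bullet x$, $x\bullet$; markings $M:P\to\mathbb{N}$, enabling (all input places marked), firing $M'=M-\bullet t+t\bullet$; net system $S=(N,M_0)$; $S$ is 1-safe if every reachable marking puts at most one token on each place. Transition adjacency relation: $t_1<_{tar}t_2$ iff there is a reachable marking $M_s$ enabling $t_1$ such that after firing $t_1$ from $M_s$, $t_2$ is enabled. For nodes of an occurrence net: $x<y$ iff there is a directed path with at least one arc from $x$ to $y$; $x\#y$ iff there are a condition $s$ and paths $s\,t_1\cdots x$, $s\,t_2\cdots y$ with $t_1\ne t_2$; $x$ co $y$ iff none of $x<y,y<x,x\#y$. The branching process $\pi=(O,h)$ ($h$ maps conditions to places and events to transitions), configurations, cut-off events w.r.t. an adequate order, and the complete prefix unfolding (greatest backward closed subnet of the unfolding with no event after a cut-off event) are as in McMillan/Esparza unfolding theory. *)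

theory Defs
  imports Main
begin

text \<open>A net N = (P,T,F); the flow relation F is split into its P-to-T part and its T-to-P part
  (places and transitions live in disjoint types).\<close>
record ('p,'t) pnet =
  places :: "'p set"
  trans :: "'t set"
  arcs_pt :: "('p \<times> 't) set"
  arcs_tp :: "('t \<times> 'p) set"

definition preT :: "('p,'t) pnet \<Rightarrow> 't \<Rightarrow> 'p set" where
  "preT N t = {p. (p, t) \<in> arcs_pt N}"

definition postT :: "('p,'t) pnet \<Rightarrow> 't \<Rightarrow> 'p set" where
  "postT N t = {p. (t, p) \<in> arcs_tp N}"

definition pnet_wf :: "('p,'t) pnet \<Rightarrow> bool" where
  "pnet_wf N \<longleftrightarrow> finite (places N) \<and> finite (trans N)
     \<and> arcs_pt N \<subseteq> places N \<times> trans N \<and> arcs_tp N \<subseteq> trans N \<times> places N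
     \<and> (\<forall>t \<in> trans N. preT N t \<noteq> {})"

type_synonym 'p marking = "'p \<Rightarrow> nat"

definition enabled :: "('p,'t) pnet \<Rightarrow> 'p marking \<Rightarrow> 't \<Rightarrow> bool" where
  "enabled N M t \<longleftrightarrow> t \<in> trans N \<and> (\<forall>p \<in> preT N t. M p \<ge> 1)"

definition fire :: "('p,'t) pnet \<Rightarrow> 'p marking \<Rightarrow> 't \<Rightarrow> 'p marking" where
  "fire N M t = (\<lambda>p. M p - (if p \<in> preT N t then 1 else 0) + (if p \<in> postT N t then 1 else 0))"

inductive_set reach :: "('p,'t) pnet \<Rightarrow> 'p marking \<Rightarrow> 'p marking set"
  for N :: "('p,'t) pnet" and M0 :: "'p marking" where
  init: "M0 \<in> reach N M0"
| step: "M \<in> reach N M0 \<Longrightarrow> enabled N M t \<Longrightarrow> fire N M t \<in> reach N M0"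

definition net_system :: "('p,'t) pnet \<Rightarrow> 'p marking \<Rightarrow> bool" where
  "net_system N M0 \<longleftrightarrow> pnet_wf N \<and> (\<forall>p. p \<notin> places N \<longrightarrow> M0 p = 0)"

definition one_safe :: "('p,'t) pnet \<Rightarrow> 'p marking \<Rightarrow> bool" where
  "one_safe N M0 \<longleftrightarrow> (\<forall>M \<in> reach N M0. \<forall>p. M p \<le> 1)"

definition tar :: "('p,'t) pnet \<Rightarrow> 'p marking \<Rightarrow> 't \<Rightarrow> 't \<Rightarrow> bool" where
  "tar N M0 t1 t2 \<longleftrightarrow>
     (\<exists>Ms \<in> reach N M0. enabled N Ms t1 \<and> enabled N (fire N Ms t1) t2)"

record ('b,'e) onet =
  conds :: "'b set"
  events :: "'e set"
  arcs_be :: "('b \<times> 'e) set"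
  arcs_eb :: "('e \<times> 'b) set"

definition oflow :: "('b,'e) onet \<Rightarrow> (('b + 'e) \<times> ('b + 'e)) set" where
  "oflow Q = {(Inl b, Inr e) | b e. (b, e) \<in> arcs_be Q} \<union> {(Inr e, Inl b) | e b. (e, b) \<in> arcs_eb Q}"

definition nodes :: "('b,'e) onet \<Rightarrow> ('b + 'e) set" where
  "nodes Q = Inl ` conds Q \<union> Inr ` events Q"

definition preE :: "('b,'e) onet \<Rightarrow> 'e \<Rightarrow> 'b set" where
  "preE Q e = {b. (b, e) \<in> arcs_be Q}"

definition postE :: "('b,'e) onet \<Rightarrow> 'e \<Rightarrow> 'b set" where
  "postE Q e = {b. (e, b) \<in> arcs_eb Q}"

definition preC :: "('b,'e) onet \<Rightarrow> 'b \<Rightarrow> 'e set" where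
  "preC Q b = {e. (e, b) \<in> arcs_eb Q}"

definition causal :: "('b,'e) onet \<Rightarrow> 'b + 'e \<Rightarrow> 'b + 'e \<Rightarrow> bool" where
  "causal Q x y \<longleftrightarrow> (x, y) \<in> (oflow Q)\<^sup>+"

definition conflict :: "('b,'e) onet \<Rightarrow> 'b + 'e \<Rightarrow> 'b + 'e \<Rightarrow> bool" where
  "conflict Q x y \<longleftrightarrow> (\<exists>s e1 e2. (s, e1) \<in> arcs_be Q \<and> (s, e2) \<in> arcs_be Q \<and> e1 \<noteq> e2
       \<and> (Inr e1, x) \<in> (oflow Q)\<^sup>* \<and> (Inr e2, y) \<in> (oflow Q)\<^sup>*)"

text \<open>x co y: none of x < y, y < x, x # y (literal definition; reflexive on non-self-conflicting nodes).\<close>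
definition co :: "('b,'e) onet \<Rightarrow> 'b + 'e \<Rightarrow> 'b + 'e \<Rightarrow> bool" where
  "co Q x y \<longleftrightarrow> \<not> causal Q x y \<and> \<not> causal Q y x \<and> \<not> conflict Q x y"

definition occ_net :: "('b,'e) onet \<Rightarrow> bool" where
  "occ_net Q \<longleftrightarrow> arcs_be Q \<subseteq> conds Q \<times> events Q \<and> arcs_eb Q \<subseteq> events Q \<times> conds Q
     \<and> (\<forall>b e1 e2. (e1, b) \<in> arcs_eb Q \<and> (e2, b) \<in> arcs_eb Q \<longrightarrow> e1 = e2)
     \<and> (\<forall>x. \<not> causal Q x x)
     \<and> (\<forall>x \<in> nodes Q. finite {y. causal Q y x})
     \<and> (\<forall>x. \<not> conflict Q x x)"

definition minC :: "('b,'e) onet \<Rightarrow> 'b set" where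
  "minC Q = {b \<in> conds Q. preC Q b = {}}"

definition bproc :: "('p,'t) pnet \<Rightarrow> 'p marking \<Rightarrow> ('b,'e) onet \<Rightarrow> ('b \<Rightarrow> 'p) \<Rightarrow> ('e \<Rightarrow> 't) \<Rightarrow> bool" where
  "bproc N M0 Q hC hE \<longleftrightarrow> occ_net Q
     \<and> hC ` conds Q \<subseteq> places N \<and> hE ` events Q \<subseteq> trans N
     \<and> (\<forall>e \<in> events Q. bij_betw hC (preE Q e) (preT N (hE e))
                      \<and> bij_betw hC (postE Q e) (postT N (hE e)))
     \<and> finite (minC Q) \<and> (\<forall>p. card {b \<in> minC Q. hC b = p} = M0 p)
     \<and> (\<forall>e1 \<in> events Q. \<forall>e2 \<in> events Q. preE Q e1 = preE Q e2 \<and> hE e1 = hE e2 \<longrightarrow> e1 = e2)"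

definition co_set :: "('b,'e) onet \<Rightarrow> 'b set \<Rightarrow> bool" where
  "co_set Q X \<longleftrightarrow> X \<subseteq> conds Q \<and> (\<forall>x \<in> X. \<forall>y \<in> X. x \<noteq> y \<longrightarrow> co Q (Inl x) (Inl y))"

text \<open>The unfolding: the (up to isomorphism unique) maximal branching process, characterised as
  a branching process that already contains every possible extension.\<close>
definition is_unfolding :: "('p,'t) pnet \<Rightarrow> 'p marking \<Rightarrow> ('b,'e) onet \<Rightarrow> ('b \<Rightarrow> 'p) \<Rightarrow> ('e \<Rightarrow> 't) \<Rightarrow> bool" where
  "is_unfolding N M0 Q hC hE \<longleftrightarrow> bproc N M0 Q hC hE
     \<and> (\<forall>t \<in> trans N. \<forall>X. co_set Q X \<and> bij_betw hC X (preT N t)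
            \<longrightarrow> (\<exists>e \<in> events Q. preE Q e = X \<and> hE e = t))"

definition configuration :: "('b,'e) onet \<Rightarrow> 'e set \<Rightarrow> bool" where
  "configuration Q Cf \<longleftrightarrow> Cf \<subseteq> events Q
     \<and> (\<forall>e \<in> Cf. \<forall>e' \<in> events Q. causal Q (Inr e') (Inr e) \<longrightarrow> e' \<in> Cf)
     \<and> (\<forall>e \<in> Cf. \<forall>e' \<in> Cf. \<not> conflict Q (Inr e) (Inr e'))"

definition fconf :: "('b,'e) onet \<Rightarrow> 'e set \<Rightarrow> bool" where
  "fconf Q Cf \<longleftrightarrow> configuration Q Cf \<and> finite Cf"

definition local_config :: "('b,'e) onet \<Rightarrow> 'e \<Rightarrow> 'e set" where
  "local_config Q e = {e' \<in> events Q. e' = e \<or> causal Q (Inr e') (Inr e)}"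

definition cut :: "('b,'e) onet \<Rightarrow> 'e set \<Rightarrow> 'b set" where
  "cut Q Cf = (minC Q \<union> (\<Union>e \<in> Cf. postE Q e)) - (\<Union>e \<in> Cf. preE Q e)"

definition mark :: "('b,'e) onet \<Rightarrow> ('b \<Rightarrow> 'p) \<Rightarrow> 'e set \<Rightarrow> 'p marking" where
  "mark Q hC Cf = (\<lambda>p. card {b \<in> cut Q Cf. hC b = p})"

definition fut_conds :: "('b,'e) onet \<Rightarrow> 'e set \<Rightarrow> 'b set" where
  "fut_conds Q Cf = {b \<in> conds Q. b \<notin> (\<Union>e \<in> Cf. preE Q e)
                        \<and> (\<forall>e \<in> Cf. \<not> conflict Q (Inl b) (Inr e))}"

definition fut_events :: "('b,'e) onet \<Rightarrow> 'e set \<Rightarrow> 'e set" where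
  "fut_events Q Cf = {e \<in> events Q. e \<notin> Cf \<and> (\<forall>e' \<in> Cf. \<not> conflict Q (Inr e) (Inr e'))}"

definition fut_iso :: "('b,'e) onet \<Rightarrow> ('b \<Rightarrow> 'p) \<Rightarrow> ('e \<Rightarrow> 't) \<Rightarrow> 'e set \<Rightarrow> 'e set
                        \<Rightarrow> ('b \<Rightarrow> 'b) \<Rightarrow> ('e \<Rightarrow> 'e) \<Rightarrow> bool" where
  "fut_iso Q hC hE C1 C2 fB fE \<longleftrightarrow>
     bij_betw fB (fut_conds Q C1) (fut_conds Q C2) \<and> bij_betw fE (fut_events Q C1) (fut_events Q C2)
     \<and> (\<forall>b \<in> fut_conds Q C1. hC (fB b) = hC b) \<and> (\<forall>e \<in> fut_events Q C1. hE (fE e) = hE e)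
     \<and> (\<forall>b \<in> fut_conds Q C1. \<forall>e \<in> fut_events Q C1.
          ((b, e) \<in> arcs_be Q \<longleftrightarrow> (fB b, fE e) \<in> arcs_be Q)
        \<and> ((e, b) \<in> arcs_eb Q \<longleftrightarrow> (fE e, fB b) \<in> arcs_eb Q))"

definition adequate_order :: "('b,'e) onet \<Rightarrow> ('b \<Rightarrow> 'p) \<Rightarrow> ('e \<Rightarrow> 't) \<Rightarrow> ('e set \<Rightarrow> 'e set \<Rightarrow> bool) \<Rightarrow> bool" where
  "adequate_order Q hC hE R \<longleftrightarrow>
     (\<forall>C1 C2. R C1 C2 \<longrightarrow> fconf Q C1 \<and> fconf Q C2)
     \<and> (\<forall>C. \<not> R C C) \<and> (\<forall>C1 C2 C3. R C1 C2 \<longrightarrow> R C2 C3 \<longrightarrow> R C1 C3)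
     \<and> wf {(C1, C2). R C1 C2}
     \<and> (\<forall>C1 C2. fconf Q C1 \<and> fconf Q C2 \<and> C1 \<subset> C2 \<longrightarrow> R C1 C2)
     \<and> (\<forall>C1 C2. R C1 C2 \<and> mark Q hC C1 = mark Q hC C2 \<longrightarrow>
          (\<forall>fB fE. fut_iso Q hC hE C1 C2 fB fE \<longrightarrow>
             (\<forall>X. finite X \<and> X \<subseteq> fut_events Q C1 \<and> configuration Q (C1 \<union> X)
                  \<longrightarrow> R (C1 \<union> X) (C2 \<union> fE ` X))))"

definition cutoff :: "('b,'e) onet \<Rightarrow> ('b \<Rightarrow> 'p) \<Rightarrow> ('e set \<Rightarrow> 'e set \<Rightarrow> bool) \<Rightarrow> 'e \<Rightarrow> bool" where
  "cutoff Q hC R e \<longleftrightarrow> e \<in> events Q \<and>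
     (\<exists>e' \<in> events Q. mark Q hC (local_config Q e') = mark Q hC (local_config Q e)
                     \<and> R (local_config Q e') (local_config Q e))"

text \<open>Complete prefix: greatest backward closed subnet containing no event after a cut-off event.\<close>
definition prefix_events :: "('b,'e) onet \<Rightarrow> ('b \<Rightarrow> 'p) \<Rightarrow> ('e set \<Rightarrow> 'e set \<Rightarrow> bool) \<Rightarrow> 'e set" where
  "prefix_events Q hC R =
     {e \<in> events Q. \<not> (\<exists>e' \<in> events Q. cutoff Q hC R e' \<and> causal Q (Inr e') (Inr e))}"

definition prefix_conds :: "('b,'e) onet \<Rightarrow> ('b \<Rightarrow> 'p) \<Rightarrow> ('e set \<Rightarrow> 'e set \<Rightarrow> bool) \<Rightarrow> 'b set" where
  "prefix_conds Q hC R = {b \<in> conds Q. \<forall>e. (e, b) \<in> arcs_eb Q \<longrightarrow> e \<in> prefix_events Q hC R}"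

definition prefix_net :: "('b,'e) onet \<Rightarrow> ('b \<Rightarrow> 'p) \<Rightarrow> ('e set \<Rightarrow> 'e set \<Rightarrow> bool) \<Rightarrow> ('b,'e) onet" where
  "prefix_net Q hC R =
     \<lparr>conds = prefix_conds Q hC R, events = prefix_events Q hC R,
      arcs_be = arcs_be Q \<inter> (prefix_conds Q hC R \<times> prefix_events Q hC R),
      arcs_eb = arcs_eb Q \<inter> (prefix_events Q hC R \<times> prefix_conds Q hC R)\<rparr>"

end

theory Submission
  imports Defs
begin

text \<open>
  If \<open>e1 \<noteq> e2\<close> are concurrent events, removing \<open>e1\<close> and \<open>e2\<close> from the union of their local
  configurations leaves a finite configuration whose reachable marking enables \<open>h(e1)\<close>, after which
  \<open>h(e2)\<close> is still enabled. In a 1-safe system the labelling is injective on cuts, so a place in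
  \<open>h(e1)\<bullet> \<inter> \<bullet>h(e2)\<close> would be the label of one condition produced by \<open>e1\<close> and consumed by
  \<open>e2\<close>, making \<open>e1 < e2\<close>.

  Conversely, if \<open>t1 <\<^sub>t\<^sub>a\<^sub>r t2\<close> with \<open>t1\<bullet> \<inter> \<bullet>t2 = {}\<close>, 1-safeness makes \<open>t1\<close> and \<open>t2\<close>
  enabled at the same reachable marking with disjoint presets. By completeness of the prefix this
  marking is that of a finite configuration \<open>C\<close> free of cut-off events: take \<open>C\<close> minimal for the
  adequate order; a cut-off event \<open>e \<in> C\<close> with companion \<open>e'\<close> would let the isomorphism between
  the futures of \<open>[e]\<close> and \<open>[e']\<close> transport \<open>C\<close> to a smaller configuration with the same marking.
  The unfolding then contains events labelled \<open>t1\<close>, \<open>t2\<close> with disjoint presets in the cut of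
  \<open>C\<close>; they are concurrent and, their pasts lying in \<open>C\<close>, belong to the prefix.
\<close>

lemma card_fiber_bij_betw:
  assumes "bij_betw f A B"
  shows "card {x \<in> A. f x = p} = (if p \<in> B then 1 else 0)"
proof (cases "p \<in> B")
  case True
  then obtain a where a: "a \<in> A" "f a = p" using assms by (auto simp: bij_betw_def)
  then have "{x \<in> A. f x = p} = {a}" using assms by (auto simp: bij_betw_def inj_on_def)
  then show ?thesis using True by simp
next
  case False
  then have "{x \<in> A. f x = p} = {}" using assms by (auto simp: bij_betw_def)
  then show ?thesis using False by (metis card.empty)
qed

lemma bij_betw_SOME_rel:
  assumes total: "rel_set r A B" and range: "\<And>x y. x \<in> A \<Longrightarrow> r x y \<Longrightarrow> y \<in> B"
    and functional: "\<And>x y z. x \<in> A \<Longrightarrow> r x y \<Longrightarrow> r x z \<Longrightarrow> y = z"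
    and injective: "\<And>x y z. x \<in> A \<Longrightarrow> y \<in> A \<Longrightarrow> r x z \<Longrightarrow> r y z \<Longrightarrow> x = y"
  shows "bij_betw (\<lambda>x. SOME y. r x y) A B"
proof -
  have r_SOME: "r x (SOME y. r x y)" if "x \<in> A" for x
    using total that by (auto simp: rel_set_def intro: someI)
  show ?thesis unfolding bij_betw_def
  proof (intro conjI inj_onI equalityI subsetI)
    fix x y assume "x \<in> A" "y \<in> A" "(SOME z. r x z) = (SOME z. r y z)"
    then show "x = y" using injective r_SOME by metis
  next
    fix y assume "y \<in> (\<lambda>x. SOME y. r x y) ` A"
    then show "y \<in> B" using range r_SOME by blast
  next
    fix y assume "y \<in> B"
    then obtain x where "x \<in> A" "r x y" using total by (auto simp: rel_set_def)
    then show "y \<in> (\<lambda>x. SOME y. r x y) ` A" using functional r_SOME by (metis image_eqI)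
  qed
qed

lemma one_safe_tar_disjoint_enabled:
  assumes "one_safe N M0" and "tar N M0 t1 t2" and "postT N t1 \<inter> preT N t2 = {}"
  obtains Ms where "Ms \<in> reach N M0" "enabled N Ms t1" "enabled N Ms t2"
    "preT N t1 \<inter> preT N t2 = {}"
proof -
  obtain Ms where Ms: "Ms \<in> reach N M0" "enabled N Ms t1" "enabled N (fire N Ms t1) t2"
    using assms(2) unfolding tar_def by blast
  have safe: "Ms p \<le> 1" for p using Ms(1) assms(1) by (simp add: one_safe_def)
  have fire_pre2: "fire N Ms t1 p = Ms p - (if p \<in> preT N t1 then 1 else 0)"
    if "p \<in> preT N t2" for p
    using that assms(3) by (auto simp: fire_def)
  have marked: "1 \<le> fire N Ms t1 p" if "p \<in> preT N t2" for p
    using Ms(3) that by (simp add: enabled_def)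
  \<comment> \<open>a shared input place would have to carry two tokens\<close>
  have "preT N t1 \<inter> preT N t2 = {}"
    using marked fire_pre2 safe by (fastforce simp: le_diff_conv)
  moreover have "enabled N Ms t2"
    using Ms(3) marked fire_pre2 by (auto simp: enabled_def)
  ultimately show thesis using that Ms(1,2) by blast
qed

lemma rel_set_Un: "rel_set r A B \<Longrightarrow> rel_set r A' B' \<Longrightarrow> rel_set r (A \<union> A') (B \<union> B')"
  by (auto simp: rel_set_def)

lemma rel_setI_total:
  assumes "\<And>x. x \<in> A \<Longrightarrow> \<exists>y. r x y" "\<And>y. y \<in> B \<Longrightarrow> \<exists>x. r x y"
    and "\<And>x y. r x y \<Longrightarrow> x \<in> A \<and> y \<in> B"
  shows "rel_set r A B"
  using assms unfolding rel_set_def by metis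

lemma rel_set_Diff_related:
  assumes "rel_set r A B" and "P \<subseteq> A"
    and injective: "\<And>x y z. x \<in> A \<Longrightarrow> y \<in> A \<Longrightarrow> r x z \<Longrightarrow> r y z \<Longrightarrow> x = y"
  shows "rel_set r (A - P) (B - {y \<in> B. \<exists>x\<in>P. r x y})"
  using assms unfolding rel_set_def by blast

lemma rel_set_unique_right:
  assumes "rel_set r A B" "rel_set r A B'"
    and "\<And>x y z. x \<in> A \<Longrightarrow> r x y \<Longrightarrow> r x z \<Longrightarrow> y = z"
  shows "B = B'"
  using assms unfolding rel_set_def by blast

lemma rel_set_image_eq:
  assumes "rel_set r A B" and "\<And>x y. r x y \<Longrightarrow> f x = g y"
  shows "f ` A = g ` B"
proof (intro equalityI image_subsetI)
  fix x assume "x \<in> A"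
  then obtain y where "y \<in> B" "f x = g y" using assms unfolding rel_set_def by blast
  then show "f x \<in> g ` B" by simp
next
  fix y assume "y \<in> B"
  then obtain x where "x \<in> A" "f x = g y" using assms unfolding rel_set_def by blast
  then show "g y \<in> f ` A" by (metis imageI)
qed

lemma adequate_order_wf: "adequate_order Q hC hE R \<Longrightarrow> wf {(C1, C2). R C1 C2}"
  unfolding adequate_order_def by blast

lemma adequate_order_extension:
  assumes "adequate_order Q hC hE R" "R C1 C2" "mark Q hC C1 = mark Q hC C2"
    "fut_iso Q hC hE C1 C2 fB fE" "finite X" "X \<subseteq> fut_events Q C1" "configuration Q (C1 \<union> X)"
  shows "R (C1 \<union> X) (C2 \<union> fE ` X)"
  using assms unfolding adequate_order_def by blast

section \<open>Occurrence nets\<close>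

locale occurrence_net =
  fixes Q :: "('b,'e) onet"
  assumes occ_net: "occ_net Q"
begin

abbreviation F :: "(('b + 'e) \<times> ('b + 'e)) set" where "F \<equiv> oflow Q"

lemma arcs_be_subset: "arcs_be Q \<subseteq> conds Q \<times> events Q"
  and arcs_eb_subset: "arcs_eb Q \<subseteq> events Q \<times> conds Q"
  and causal_irrefl: "\<not> causal Q x x"
  and finite_past: "x \<in> nodes Q \<Longrightarrow> finite {y. causal Q y x}"
  and conflict_irrefl: "\<not> conflict Q x x"
  using occ_net by (simp_all add: occ_net_def)

lemma input_event_unique: "(e1, b) \<in> arcs_eb Q \<Longrightarrow> (e2, b) \<in> arcs_eb Q \<Longrightarrow> e1 = e2"
  using occ_net unfolding occ_net_def by blast

lemma oflow_simps [simp]: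
  "(Inl b, Inr e) \<in> F \<longleftrightarrow> (b, e) \<in> arcs_be Q" "(Inr e, Inl b) \<in> F \<longleftrightarrow> (e, b) \<in> arcs_eb Q"
  "(Inl b, Inl b') \<notin> F" "(Inr e, Inr e') \<notin> F"
  by (auto simp: oflow_def)

lemma oflow_to_Inl: "(x, Inl b) \<in> F \<Longrightarrow> \<exists>e. x = Inr e \<and> (e, b) \<in> arcs_eb Q"
  and oflow_to_Inr: "(x, Inr e) \<in> F \<Longrightarrow> \<exists>b. x = Inl b \<and> (b, e) \<in> arcs_be Q"
  and oflow_from_Inl: "(Inl b, y) \<in> F \<Longrightarrow> \<exists>e. y = Inr e \<and> (b, e) \<in> arcs_be Q"
  and oflow_from_Inr: "(Inr e, y) \<in> F \<Longrightarrow> \<exists>b. y = Inl b \<and> (e, b) \<in> arcs_eb Q"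
  by (auto simp: oflow_def)

lemma trancl_to_Inl: "(x, Inl b) \<in> F\<^sup>+ \<Longrightarrow> \<exists>e. (e, b) \<in> arcs_eb Q \<and> (x, Inr e) \<in> F\<^sup>*"
  by (blast dest: tranclD2 oflow_to_Inl)

lemma trancl_to_Inr: "(x, Inr e) \<in> F\<^sup>+ \<Longrightarrow> \<exists>b. (b, e) \<in> arcs_be Q \<and> (x, Inl b) \<in> F\<^sup>*"
  by (blast dest: tranclD2 oflow_to_Inr)

lemma trancl_from_Inl: "(Inl b, y) \<in> F\<^sup>+ \<Longrightarrow> \<exists>e. (b, e) \<in> arcs_be Q \<and> (Inr e, y) \<in> F\<^sup>*"
  by (blast dest: tranclD oflow_from_Inl)

lemma trancl_from_Inr_event: "(Inr c, y) \<in> F\<^sup>+ \<Longrightarrow> c \<in> events Q"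
  using arcs_eb_subset by (blast dest: tranclD oflow_from_Inr)

lemma rtrancl_event_event: "(Inr c, Inr e) \<in> F\<^sup>* \<Longrightarrow> c = e \<or> causal Q (Inr c) (Inr e)"
  by (auto simp: causal_def rtrancl_eq_or_trancl)

lemma rtrancl_event_cond: "(Inr c, Inl b) \<in> F\<^sup>* \<Longrightarrow> \<exists>e. (e, b) \<in> arcs_eb Q \<and> (Inr c, Inr e) \<in> F\<^sup>*"
  by (metis rtrancl_eq_or_trancl sum.distinct(2) trancl_to_Inl)

lemma causal_event_via_input:
  "causal Q (Inr c) (Inr e) \<Longrightarrow> \<exists>b. (b, e) \<in> arcs_be Q \<and> (Inr c, Inl b) \<in> F\<^sup>*"
  unfolding causal_def by (rule trancl_to_Inr)

lemma causal_via_cond: "(d, b) \<in> arcs_eb Q \<Longrightarrow> (b, e) \<in> arcs_be Q \<Longrightarrow> causal Q (Inr d) (Inr e)"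
  unfolding causal_def by (meson oflow_simps(1,2) trancl.simps)

lemma causal_trans: "causal Q x y \<Longrightarrow> causal Q y z \<Longrightarrow> causal Q x z"
  unfolding causal_def by (rule trancl_trans)

lemma causal_rtrancl_trans: "causal Q x y \<Longrightarrow> (y, z) \<in> F\<^sup>* \<Longrightarrow> causal Q x z"
  unfolding causal_def by (rule trancl_rtrancl_trancl)

lemma conflictI:
  "(s, e1) \<in> arcs_be Q \<Longrightarrow> (s, e2) \<in> arcs_be Q \<Longrightarrow> e1 \<noteq> e2
    \<Longrightarrow> (Inr e1, x) \<in> F\<^sup>* \<Longrightarrow> (Inr e2, y) \<in> F\<^sup>* \<Longrightarrow> conflict Q x y"
  unfolding conflict_def by blast

lemma conflictE:
  assumes "conflict Q x y"
  obtains s e1 e2 where "(s, e1) \<in> arcs_be Q" "(s, e2) \<in> arcs_be Q" "e1 \<noteq> e2"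
    "(Inr e1, x) \<in> F\<^sup>*" "(Inr e2, y) \<in> F\<^sup>*"
  using assms unfolding conflict_def by blast

lemma conflict_sym: "conflict Q x y \<Longrightarrow> conflict Q y x"
  by (blast elim: conflictE intro: conflictI)

lemma conflict_rtrancl_right: "conflict Q x y \<Longrightarrow> (y, z) \<in> F\<^sup>* \<Longrightarrow> conflict Q x z"
  by (blast elim: conflictE intro: conflictI rtrancl_trans)

lemma conflict_rtrancl_left: "conflict Q x y \<Longrightarrow> (x, z) \<in> F\<^sup>* \<Longrightarrow> conflict Q z y"
  by (blast intro: conflict_sym conflict_rtrancl_right)

lemma conflict_shared_input:
  "(b, e1) \<in> arcs_be Q \<Longrightarrow> (b, e2) \<in> arcs_be Q \<Longrightarrow> e1 \<noteq> e2 \<Longrightarrow> conflict Q (Inr e1) (Inr e2)"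
  by (blast intro: conflictI)

lemma configuration_events: "configuration Q D \<Longrightarrow> D \<subseteq> events Q"
  and configuration_conflict_free:
    "configuration Q D \<Longrightarrow> d1 \<in> D \<Longrightarrow> d2 \<in> D \<Longrightarrow> \<not> conflict Q (Inr d1) (Inr d2)"
  by (simp_all add: configuration_def)

lemma configuration_empty: "configuration Q {}"
  by (simp add: configuration_def)

lemma configuration_past_closed:
  assumes D: "configuration Q D" and "e \<in> D" and "(Inr c, Inr e) \<in> F\<^sup>*"
  shows "c \<in> D"
proof (cases "c = e")
  case False
  then have "causal Q (Inr c) (Inr e)" using assms(3) rtrancl_event_event by blast
  moreover from this have "c \<in> events Q" unfolding causal_def by (rule trancl_from_Inr_event)
  ultimately show ?thesis using D \<open>e \<in> D\<close> by (auto simp: configuration_def)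
qed (use assms in simp)

lemma configuration_Un:
  assumes "configuration Q A" "configuration Q B"
    and "\<And>x y. x \<in> A \<Longrightarrow> y \<in> B \<Longrightarrow> \<not> conflict Q (Inr x) (Inr y)"
  shows "configuration Q (A \<union> B)"
  using assms conflict_sym unfolding configuration_def by blast

lemma cut_input_event: "b \<in> cut Q D \<Longrightarrow> (e, b) \<in> arcs_eb Q \<Longrightarrow> e \<in> D"
  unfolding cut_def minC_def preC_def postE_def using input_event_unique by blast

lemma cut_subset_conds: "configuration Q D \<Longrightarrow> cut Q D \<subseteq> conds Q"
  unfolding cut_def minC_def postE_def configuration_def using arcs_eb_subset by auto

lemma cut_not_input: "b \<in> cut Q D \<Longrightarrow> d \<in> D \<Longrightarrow> (b, d) \<notin> arcs_be Q"
  unfolding cut_def preE_def by blast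

lemma not_causal_cut:
  assumes D: "configuration Q D" and "b \<in> cut Q D" "b' \<in> cut Q D"
  shows "\<not> causal Q (Inl b) (Inl b')"
proof
  assume "causal Q (Inl b) (Inl b')"
  then obtain e where e: "(e, b') \<in> arcs_eb Q" "(Inl b, Inr e) \<in> F\<^sup>+"
    unfolding causal_def by (metis trancl_to_Inl rtrancl_eq_or_trancl sum.distinct(1))
  then obtain c where c: "(b, c) \<in> arcs_be Q" "(Inr c, Inr e) \<in> F\<^sup>*"
    using trancl_from_Inl by blast
  have "c \<in> D" using configuration_past_closed[OF D cut_input_event[OF \<open>b' \<in> cut Q D\<close> e(1)] c(2)] .
  then show False using cut_not_input \<open>b \<in> cut Q D\<close> c(1) by blast
qed

lemma not_conflict_cut:
  assumes D: "configuration Q D" and "b \<in> cut Q D" "b' \<in> cut Q D"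
  shows "\<not> conflict Q (Inl b) (Inl b')"
proof
  assume "conflict Q (Inl b) (Inl b')"
  then obtain s c c' where s: "(s, c) \<in> arcs_be Q" "(s, c') \<in> arcs_be Q" "c \<noteq> c'"
    and paths: "(Inr c, Inl b) \<in> F\<^sup>*" "(Inr c', Inl b') \<in> F\<^sup>*" by (rule conflictE)
  \<comment> \<open>both branches of the conflict lie in the past of the cut, i.e.\ in \<open>D\<close>\<close>
  have "c \<in> D" "c' \<in> D"
    using paths assms by (metis rtrancl_event_cond cut_input_event configuration_past_closed)+
  then show False using conflict_shared_input[OF s] configuration_conflict_free[OF D] by blast
qed

lemma co_set_cut: "configuration Q D \<Longrightarrow> co_set Q (cut Q D)"
  unfolding co_set_def co_def
  using cut_subset_conds not_causal_cut not_conflict_cut by blast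

lemma past_in_configuration:
  assumes D: "configuration Q D" and pre: "preE Q e \<subseteq> cut Q D" and "causal Q (Inr c) (Inr e)"
  shows "c \<in> D"
proof -
  obtain b where b: "(b, e) \<in> arcs_be Q" "(Inr c, Inl b) \<in> F\<^sup>*"
    using causal_event_via_input assms(3) by blast
  obtain d where d: "(d, b) \<in> arcs_eb Q" "(Inr c, Inr d) \<in> F\<^sup>*"
    using rtrancl_event_cond b(2) by blast
  have "d \<in> D" using pre b(1) d(1) cut_input_event by (auto simp: preE_def)
  then show ?thesis using configuration_past_closed[OF D _ d(2)] by blast
qed

lemma enabled_event_not_in:
  "preE Q e \<subseteq> cut Q D \<Longrightarrow> preE Q e \<noteq> {} \<Longrightarrow> e \<notin> D"
  using cut_not_input by (fastforce simp: preE_def)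

lemma enabled_event_conflict_free:
  assumes D: "configuration Q D" and pre: "preE Q e \<subseteq> cut Q D" and d: "d \<in> D"
  shows "\<not> conflict Q (Inr e) (Inr d)"
proof
  assume "conflict Q (Inr e) (Inr d)"
  then obtain s c c' where s: "(s, c) \<in> arcs_be Q" "(s, c') \<in> arcs_be Q" "c \<noteq> c'"
    and paths: "(Inr c, Inr e) \<in> F\<^sup>*" "(Inr c', Inr d) \<in> F\<^sup>*" by (rule conflictE)
  have c': "c' \<in> D" using configuration_past_closed[OF D d paths(2)] .
  show False
  proof (cases "c = e")
    case True
    then have "s \<in> cut Q D" using pre s(1) by (auto simp: preE_def)
    then show False using cut_not_input c' s(2) by blast
  next
    case False
    then have "c \<in> D"
      using past_in_configuration[OF D pre] rtrancl_event_event paths(1) by blast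
    then show False
      using conflict_shared_input[OF s] configuration_conflict_free[OF D _ c'] by blast
  qed
qed

lemma configuration_insert:
  assumes D: "configuration Q D" and e: "e \<in> events Q" and pre: "preE Q e \<subseteq> cut Q D"
  shows "configuration Q (insert e D)"
  unfolding configuration_def
proof (intro conjI ballI impI)
  show "insert e D \<subseteq> events Q" using e configuration_events[OF D] by blast
next
  fix x c assume "x \<in> insert e D" "c \<in> events Q" "causal Q (Inr c) (Inr x)"
  then show "c \<in> insert e D"
    using past_in_configuration[OF D pre] D by (auto simp: configuration_def)
next
  fix x y assume "x \<in> insert e D" "y \<in> insert e D"
  then show "\<not> conflict Q (Inr x) (Inr y)"
    using enabled_event_conflict_free[OF D pre] configuration_conflict_free[OF D]
      conflict_sym conflict_irrefl by blast
qed

lemma cut_insert: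
  assumes D: "configuration Q D" and pre: "preE Q e \<subseteq> cut Q D" and "e \<notin> D"
  shows "cut Q (insert e D) = (cut Q D - preE Q e) \<union> postE Q e"
proof -
  have "\<not> causal Q (Inr e) (Inr d)" if "d \<in> insert e D" for d
  proof
    assume c: "causal Q (Inr e) (Inr d)"
    then have "e \<in> events Q" unfolding causal_def by (rule trancl_from_Inr_event)
    then show False using that c causal_irrefl D \<open>e \<notin> D\<close> by (auto simp: configuration_def)
  qed
  then have "postE Q e \<inter> preE Q d = {}" if "d \<in> insert e D" for d
    using that causal_via_cond by (fastforce simp: preE_def postE_def)
  then show ?thesis unfolding cut_def by auto
qed

lemma exists_causal_maximal:
  assumes "finite S" "S \<noteq> {}" "S \<subseteq> events Q"
  shows "\<exists>x\<in>S. \<forall>y\<in>S. \<not> causal Q (Inr x) (Inr y)"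
proof -
  \<comment> \<open>an element with the largest past is maximal, since pasts grow strictly along \<open>causal\<close>\<close>
  define past_size where "past_size x = card {z. causal Q z (Inr x)}" for x
  have "Max (past_size ` S) \<in> past_size ` S" using assms by simp
  then obtain x where x: "x \<in> S" "past_size x = Max (past_size ` S)" by (metis imageE)
  have "past_size x < past_size y" if "y \<in> S" "causal Q (Inr x) (Inr y)" for y
  proof -
    have "{z. causal Q z (Inr x)} \<subset> {z. causal Q z (Inr y)}"
      using that(2) causal_trans causal_irrefl by blast
    moreover have "finite {z. causal Q z (Inr y)}"
      using finite_past that(1) assms(3) by (auto simp: nodes_def)
    ultimately show ?thesis unfolding past_size_def using psubset_card_mono by blast
  qed
  moreover have "past_size y \<le> past_size x" if "y \<in> S" for y
    using that x(2) assms(1) by simp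
  ultimately show ?thesis using x(1) by (meson leD)
qed

lemma configuration_remove_maximal:
  assumes D: "configuration Q D" and x: "x \<in> D" and maximal: "\<forall>y\<in>D. \<not> causal Q (Inr x) (Inr y)"
  shows "configuration Q (D - {x})" "preE Q x \<subseteq> cut Q (D - {x})"
proof -
  show "configuration Q (D - {x})"
    using D maximal unfolding configuration_def by blast
  show "preE Q x \<subseteq> cut Q (D - {x})"
  proof
    fix b assume "b \<in> preE Q x"
    then have bx: "(b, x) \<in> arcs_be Q" by (simp add: preE_def)
    have "b \<in> minC Q \<union> (\<Union>e\<in>D - {x}. postE Q e)"
    proof (cases "preC Q b = {}")
      case True then show ?thesis using bx arcs_be_subset by (auto simp: minC_def)
    next
      case False
      then obtain d where d: "(d, b) \<in> arcs_eb Q" by (auto simp: preC_def)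
      then have "causal Q (Inr d) (Inr x)" using causal_via_cond bx by blast
      then have "d \<in> D - {x}"
        using D x arcs_eb_subset d causal_irrefl by (auto simp: configuration_def)
      then show ?thesis using d by (auto simp: postE_def)
    qed
    moreover have "b \<notin> preE Q d" if "d \<in> D - {x}" for d
      using that conflict_shared_input[OF bx] configuration_conflict_free[OF D x]
      by (auto simp: preE_def)
    ultimately show "b \<in> cut Q (D - {x})" unfolding cut_def by blast
  qed
qed

lemma local_config_rtrancl: "x \<in> local_config Q e \<Longrightarrow> (Inr x, Inr e) \<in> F\<^sup>*"
  by (auto simp: local_config_def causal_def)

lemma local_config_self: "e \<in> events Q \<Longrightarrow> e \<in> local_config Q e"
  by (simp add: local_config_def)

lemma local_config_causal: "y \<in> local_config Q e \<Longrightarrow> causal Q x (Inr y) \<Longrightarrow> causal Q x (Inr e)"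
  using causal_rtrancl_trans local_config_rtrancl by blast

lemma local_config_subset: "configuration Q C \<Longrightarrow> e \<in> C \<Longrightarrow> local_config Q e \<subseteq> C"
  by (auto simp: local_config_def configuration_def)

lemma conflict_local_config:
  assumes "x \<in> local_config Q e1" "y \<in> local_config Q e2" "conflict Q (Inr x) (Inr y)"
  shows "conflict Q (Inr e1) (Inr e2)"
  using conflict_rtrancl_right[OF
      conflict_rtrancl_left[OF assms(3) local_config_rtrancl[OF assms(1)]]
      local_config_rtrancl[OF assms(2)]] .

lemma fconf_local_config:
  assumes e: "e \<in> events Q"
  shows "fconf Q (local_config Q e)"
proof -
  have "configuration Q (local_config Q e)" unfolding configuration_def
  proof (intro conjI ballI impI)
    show "local_config Q e \<subseteq> events Q" by (auto simp: local_config_def)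
  next
    fix x c assume "x \<in> local_config Q e" "c \<in> events Q" "causal Q (Inr c) (Inr x)"
    then have "causal Q (Inr c) (Inr e)" using local_config_causal by blast
    then show "c \<in> local_config Q e" using \<open>c \<in> events Q\<close> by (simp add: local_config_def)
  next
    fix x y assume "x \<in> local_config Q e" "y \<in> local_config Q e"
    then show "\<not> conflict Q (Inr x) (Inr y)" using conflict_local_config conflict_irrefl by blast
  qed
  moreover have "finite (local_config Q e)"
  proof -
    have "finite {y. causal Q y (Inr e)}" using finite_past e by (simp add: nodes_def)
    then have "finite (Inr -` {y. causal Q y (Inr e)} :: 'e set)" by (rule finite_vimageI) simp
    moreover have "local_config Q e \<subseteq> insert e (Inr -` {y. causal Q y (Inr e)})"
      by (auto simp: local_config_def)
    ultimately show ?thesis by (simp add: finite_subset)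
  qed
  ultimately show ?thesis by (simp add: fconf_def)
qed

lemma configuration_Un_local_config:
  assumes C: "configuration Q C" and e: "e \<in> fut_events Q C"
  shows "configuration Q (C \<union> local_config Q e)"
proof (rule configuration_Un[OF C])
  show "configuration Q (local_config Q e)"
    using fconf_local_config e by (simp add: fconf_def fut_events_def)
  fix x y assume x: "x \<in> C" and y: "y \<in> local_config Q e"
  show "\<not> conflict Q (Inr x) (Inr y)"
  proof
    assume "conflict Q (Inr x) (Inr y)"
    moreover have "x \<in> local_config Q x" using x C local_config_self configuration_events by blast
    ultimately have "conflict Q (Inr e) (Inr x)" using conflict_local_config y conflict_sym by blast
    then show False using e x by (simp add: fut_events_def)
  qed
qed

lemma co_events_sequential_extension:
  assumes e1: "e1 \<in> events Q" and e2: "e2 \<in> events Q" and "e1 \<noteq> e2"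
    and co: "co Q (Inr e1) (Inr e2)"
  obtains D where "fconf Q D" "preE Q e1 \<subseteq> cut Q D" "e1 \<notin> D"
    "fconf Q (insert e1 D)" "preE Q e2 \<subseteq> cut Q (insert e1 D)" "e2 \<notin> insert e1 D"
proof -
  have no_causal: "\<not> causal Q (Inr e1) (Inr e2)" "\<not> causal Q (Inr e2) (Inr e1)"
    and no_conflict: "\<not> conflict Q (Inr e1) (Inr e2)" using co by (simp_all add: co_def)
  define L where "L = local_config Q e1 \<union> local_config Q e2"
  have L1: "fconf Q (local_config Q e1)" and L2: "fconf Q (local_config Q e2)"
    using fconf_local_config e1 e2 by blast+
  have "configuration Q L" unfolding L_def
  proof (rule configuration_Un)
    show "configuration Q (local_config Q e1)" "configuration Q (local_config Q e2)"
      using L1 L2 by (simp_all add: fconf_def)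
    fix x y assume "x \<in> local_config Q e1" "y \<in> local_config Q e2"
    then show "\<not> conflict Q (Inr x) (Inr y)" using conflict_local_config no_conflict by blast
  qed
  have "finite L" using L1 L2 by (simp add: L_def fconf_def)
  have maximal: "\<not> causal Q (Inr e) (Inr y)" if "e \<in> {e1, e2}" "y \<in> L" for e y
  proof
    assume "causal Q (Inr e) (Inr y)"
    then have "causal Q (Inr e) (Inr e1) \<or> causal Q (Inr e) (Inr e2)"
      using \<open>y \<in> L\<close> local_config_causal unfolding L_def by blast
    then show False using that(1) no_causal causal_irrefl by blast
  qed
  have "e1 \<in> L - {e2}" "e2 \<in> L" using local_config_self e1 e2 \<open>e1 \<noteq> e2\<close> by (auto simp: L_def)
  have "\<forall>y\<in>L. \<not> causal Q (Inr e2) (Inr y)" "\<forall>y\<in>L - {e2}. \<not> causal Q (Inr e1) (Inr y)"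
    using maximal by blast+
  note L_e2 = configuration_remove_maximal[OF \<open>configuration Q L\<close> \<open>e2 \<in> L\<close> this(1)]
    and D = configuration_remove_maximal[OF L_e2(1) \<open>e1 \<in> L - {e2}\<close> this(2)]
  have L_e2_eq: "insert e1 (L - {e2} - {e1}) = L - {e2}" using \<open>e1 \<in> L - {e2}\<close> by blast
  show thesis
  proof (rule that)
    show "fconf Q (L - {e2} - {e1})" "fconf Q (insert e1 (L - {e2} - {e1}))"
      using D(1) L_e2(1) L_e2_eq \<open>finite L\<close> by (simp_all add: fconf_def)
    show "preE Q e1 \<subseteq> cut Q (L - {e2} - {e1})" "e1 \<notin> L - {e2} - {e1}" using D(2) by simp_all
    show "preE Q e2 \<subseteq> cut Q (insert e1 (L - {e2} - {e1}))" "e2 \<notin> insert e1 (L - {e2} - {e1})"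
      using L_e2(2) L_e2_eq \<open>e1 \<noteq> e2\<close> by simp_all
  qed
qed

lemma enabled_events_co:
  assumes C: "configuration Q C" and e: "e1 \<in> events Q" "e2 \<in> events Q"
    and nonempty: "preE Q e1 \<noteq> {}" "preE Q e2 \<noteq> {}"
    and pre: "preE Q e1 \<subseteq> cut Q C" "preE Q e2 \<subseteq> cut Q C"
    and disjoint: "preE Q e1 \<inter> preE Q e2 = {}"
  shows "e1 \<noteq> e2" "co Q (Inr e1) (Inr e2)"
proof -
  show "e1 \<noteq> e2" using nonempty disjoint by blast
  have not_in: "e1 \<notin> C" "e2 \<notin> C" using enabled_event_not_in pre nonempty by blast+
  have "preE Q e2 \<subseteq> cut Q (insert e1 C)"
    using cut_insert[OF C pre(1) not_in(1)] pre(2) disjoint by blast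
  then have "configuration Q (insert e2 (insert e1 C))"
    using configuration_insert C e pre(1) by blast
  then have "\<not> conflict Q (Inr e1) (Inr e2)" using configuration_conflict_free by blast
  moreover have "\<not> causal Q (Inr e1) (Inr e2)" "\<not> causal Q (Inr e2) (Inr e1)"
    using past_in_configuration[OF C] pre not_in by blast+
  ultimately show "co Q (Inr e1) (Inr e2)" by (simp add: co_def)
qed

lemma cut_subset_fut_conds:
  assumes C: "configuration Q C" and b: "b \<in> cut Q C"
  shows "b \<in> fut_conds Q C"
proof -
  have "\<not> conflict Q (Inl b) (Inr c)" if c: "c \<in> C" for c
  proof
    assume "conflict Q (Inl b) (Inr c)"
    then obtain s c1 c2 where s: "(s, c1) \<in> arcs_be Q" "(s, c2) \<in> arcs_be Q" "c1 \<noteq> c2"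
      and paths: "(Inr c1, Inl b) \<in> F\<^sup>*" "(Inr c2, Inr c) \<in> F\<^sup>*" by (rule conflictE)
    obtain d where "(d, b) \<in> arcs_eb Q" "(Inr c1, Inr d) \<in> F\<^sup>*"
      using rtrancl_event_cond paths(1) by blast
    then have "c1 \<in> C" using configuration_past_closed[OF C] cut_input_event b by blast
    moreover have "c2 \<in> C" using configuration_past_closed[OF C c paths(2)] .
    ultimately show False
      using conflict_shared_input[OF s] configuration_conflict_free[OF C] by blast
  qed
  then show ?thesis using cut_subset_conds[OF C] b by (auto simp: fut_conds_def cut_def)
qed

lemma fut_eventsI:
  assumes C: "configuration Q C" and e: "e \<in> events Q" and "preE Q e \<noteq> {}"
    and pre: "preE Q e \<subseteq> fut_conds Q C"
  shows "e \<in> fut_events Q C"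
proof -
  have "e \<notin> C" using pre \<open>preE Q e \<noteq> {}\<close> by (auto simp: fut_conds_def)
  moreover have "\<not> conflict Q (Inr e) (Inr c)" if c: "c \<in> C" for c
  proof
    assume "conflict Q (Inr e) (Inr c)"
    then obtain s c1 c2 where s: "(s, c1) \<in> arcs_be Q" "(s, c2) \<in> arcs_be Q" "c1 \<noteq> c2"
      and paths: "(Inr c1, Inr e) \<in> F\<^sup>*" "(Inr c2, Inr c) \<in> F\<^sup>*" by (rule conflictE)
    have c2: "c2 \<in> C" using configuration_past_closed[OF C c paths(2)] .
    show False
    proof (cases "c1 = e")
      case True
      then have "s \<in> fut_conds Q C" using pre s(1) by (auto simp: preE_def)
      then show False using s(2) c2 by (auto simp: fut_conds_def preE_def)
    next
      case False
      then obtain b where "(b, e) \<in> arcs_be Q" "(Inr c1, Inl b) \<in> F\<^sup>*"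
        using causal_event_via_input rtrancl_event_event paths(1) by blast
      moreover from this have "conflict Q (Inl b) (Inr c)" using conflictI[OF s] paths(2) by blast
      ultimately show False using pre c by (auto simp: fut_conds_def preE_def)
    qed
  qed
  ultimately show ?thesis using e by (simp add: fut_events_def)
qed

lemma post_in_fut_conds:
  assumes C: "configuration Q C" and e: "e \<in> fut_events Q C" and eb: "(e, b) \<in> arcs_eb Q"
  shows "b \<in> fut_conds Q C"
proof -
  have e_ev: "e \<in> events Q" and "e \<notin> C" and e_cf: "\<forall>c\<in>C. \<not> conflict Q (Inr e) (Inr c)"
    using e by (auto simp: fut_events_def)
  have "b \<notin> preE Q c" if "c \<in> C" for c
    using that \<open>e \<notin> C\<close> e_ev C causal_via_cond[OF eb] by (auto simp: preE_def configuration_def)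
  moreover have "\<not> conflict Q (Inl b) (Inr c)" if "c \<in> C" for c
  proof
    assume "conflict Q (Inl b) (Inr c)"
    then obtain s c1 c2 where s: "(s, c1) \<in> arcs_be Q" "(s, c2) \<in> arcs_be Q" "c1 \<noteq> c2"
      and paths: "(Inr c1, Inl b) \<in> F\<^sup>*" "(Inr c2, Inr c) \<in> F\<^sup>*" by (rule conflictE)
    \<comment> \<open>the path into \<open>b\<close> must pass through its unique input event \<open>e\<close>\<close>
    have "(Inr c1, Inr e) \<in> F\<^sup>*"
      using rtrancl_event_cond[OF paths(1)] input_event_unique eb by blast
    then show False using conflictI[OF s _ paths(2)] e_cf that by blast
  qed
  ultimately show ?thesis using eb arcs_eb_subset by (auto simp: fut_conds_def)
qed

lemma prefix_oflow_backward:
  assumes "(z, y) \<in> F" and "y \<in> nodes (prefix_net Q hC R)"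
  shows "z \<in> nodes (prefix_net Q hC R) \<and> (z, y) \<in> oflow (prefix_net Q hC R)"
proof (cases y)
  case (Inr e)
  then obtain b where b: "z = Inl b" "(b, e) \<in> arcs_be Q" using oflow_to_Inr assms(1) by blast
  have e: "e \<in> prefix_events Q hC R" using assms(2) Inr by (auto simp: nodes_def prefix_net_def)
  \<comment> \<open>the input event of \<open>b\<close> lies in the past of \<open>e\<close>, hence after no cut-off\<close>
  have "e' \<in> prefix_events Q hC R" if "(e', b) \<in> arcs_eb Q" for e'
    using e that causal_via_cond[OF that b(2)] causal_trans arcs_eb_subset
    by (auto simp: prefix_events_def)
  then have "b \<in> prefix_conds Q hC R" using b(2) arcs_be_subset by (auto simp: prefix_conds_def)
  then show ?thesis using b e Inr by (simp add: nodes_def oflow_def prefix_net_def)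
next
  case (Inl b)
  then obtain e where e: "z = Inr e" "(e, b) \<in> arcs_eb Q" using oflow_to_Inl assms(1) by blast
  have "b \<in> prefix_conds Q hC R" using assms(2) Inl by (auto simp: nodes_def prefix_net_def)
  then show ?thesis using e Inl by (auto simp: nodes_def oflow_def prefix_net_def prefix_conds_def)
qed

lemma prefix_trancl_backward:
  "(x, y) \<in> F\<^sup>+ \<Longrightarrow> y \<in> nodes (prefix_net Q hC R)
    \<Longrightarrow> (x, y) \<in> (oflow (prefix_net Q hC R))\<^sup>+ \<and> x \<in> nodes (prefix_net Q hC R)"
proof (induction rule: converse_trancl_induct)
  case (base x)
  then show ?case using prefix_oflow_backward by blast
next
  case (step x z)
  then have "x \<in> nodes (prefix_net Q hC R)" "(x, z) \<in> oflow (prefix_net Q hC R)"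
    using prefix_oflow_backward by blast+
  then show ?case using step by (blast intro: trancl_into_trancl2)
qed

lemma prefix_rtrancl_backward:
  "(x, y) \<in> F\<^sup>* \<Longrightarrow> y \<in> nodes (prefix_net Q hC R)
    \<Longrightarrow> (x, y) \<in> (oflow (prefix_net Q hC R))\<^sup>* \<and> x \<in> nodes (prefix_net Q hC R)"
  using prefix_trancl_backward by (metis rtrancl_eq_or_trancl trancl_into_rtrancl)

lemma oflow_prefix_net_subset: "oflow (prefix_net Q hC R) \<subseteq> F"
  by (auto simp: oflow_def prefix_net_def)

lemma co_prefix_net_iff:
  assumes "x \<in> nodes (prefix_net Q hC R)" "y \<in> nodes (prefix_net Q hC R)"
  shows "co (prefix_net Q hC R) x y \<longleftrightarrow> co Q x y"
proof -
  let ?P = "prefix_net Q hC R"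
  have "causal ?P u v \<longleftrightarrow> causal Q u v" if "v \<in> nodes ?P" for u v
    using that prefix_trancl_backward trancl_mono[OF _ oflow_prefix_net_subset]
    unfolding causal_def by blast
  moreover have "conflict ?P x y \<longleftrightarrow> conflict Q x y"
  proof
    assume "conflict ?P x y"
    then obtain s e1 e2 where "(s, e1) \<in> arcs_be ?P" "(s, e2) \<in> arcs_be ?P" "e1 \<noteq> e2"
      and "(Inr e1, x) \<in> (oflow ?P)\<^sup>*" "(Inr e2, y) \<in> (oflow ?P)\<^sup>*"
      unfolding conflict_def by blast
    moreover have "(oflow ?P)\<^sup>* \<subseteq> F\<^sup>*" by (rule rtrancl_mono[OF oflow_prefix_net_subset])
    ultimately show "conflict Q x y" by (intro conflictI[of s e1 e2]) (auto simp: prefix_net_def)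
  next
    assume "conflict Q x y"
    then obtain s e1 e2 where s: "(s, e1) \<in> arcs_be Q" "(s, e2) \<in> arcs_be Q" "e1 \<noteq> e2"
      and paths: "(Inr e1, x) \<in> F\<^sup>*" "(Inr e2, y) \<in> F\<^sup>*" by (rule conflictE)
    have "(Inr e1, x) \<in> (oflow ?P)\<^sup>*" "Inr e1 \<in> nodes ?P"
      "(Inr e2, y) \<in> (oflow ?P)\<^sup>*" "Inr e2 \<in> nodes ?P"
      using prefix_rtrancl_backward paths assms by blast+
    moreover have "(s, e1) \<in> arcs_be ?P" "(s, e2) \<in> arcs_be ?P"
      using prefix_oflow_backward[of "Inl s"] s calculation by (auto simp: oflow_def)
    ultimately show "conflict ?P x y" unfolding conflict_def using s(3) by blast
  qed
  ultimately show ?thesis using assms unfolding co_def by blast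
qed


lemma concurrent_prefix_events_iff:
  "(\<exists>e1 \<in> events (prefix_net Q hC R). \<exists>e2 \<in> events (prefix_net Q hC R).
      e1 \<noteq> e2 \<and> co (prefix_net Q hC R) (Inr e1) (Inr e2) \<and> P e1 e2)
   \<longleftrightarrow> (\<exists>e1 \<in> prefix_events Q hC R. \<exists>e2 \<in> prefix_events Q hC R.
      e1 \<noteq> e2 \<and> co Q (Inr e1) (Inr e2) \<and> P e1 e2)"
proof -
  have "co (prefix_net Q hC R) (Inr e1) (Inr e2) \<longleftrightarrow> co Q (Inr e1) (Inr e2)"
    if "e1 \<in> prefix_events Q hC R" "e2 \<in> prefix_events Q hC R" for e1 e2
    using that by (intro co_prefix_net_iff) (simp_all add: nodes_def prefix_net_def)
  moreover have "events (prefix_net Q hC R) = prefix_events Q hC R" by (simp add: prefix_net_def)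
  ultimately show ?thesis by auto
qed
end

section \<open>Branching processes and safe unfoldings\<close>

locale branching_process =
  fixes N :: "('p,'t) pnet" and M0 :: "'p marking" and Q :: "('b,'e) onet"
    and hC :: "'b \<Rightarrow> 'p" and hE :: "'e \<Rightarrow> 't"
  assumes net_system: "net_system N M0" and bproc: "bproc N M0 Q hC hE"

sublocale branching_process \<subseteq> occurrence_net Q
  using bproc by unfold_locales (simp add: bproc_def)

context branching_process
begin

lemma bij_betw_preE: "e \<in> events Q \<Longrightarrow> bij_betw hC (preE Q e) (preT N (hE e))"
  and bij_betw_postE: "e \<in> events Q \<Longrightarrow> bij_betw hC (postE Q e) (postT N (hE e))"
  and event_label_trans: "e \<in> events Q \<Longrightarrow> hE e \<in> trans N"
  and finite_minC: "finite (minC Q)"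
  and card_minC: "card {b \<in> minC Q. hC b = p} = M0 p"
  and events_eqI: "e1 \<in> events Q \<Longrightarrow> e2 \<in> events Q \<Longrightarrow> preE Q e1 = preE Q e2
    \<Longrightarrow> hE e1 = hE e2 \<Longrightarrow> e1 = e2"
  using bproc by (auto simp: bproc_def)

lemma pnet_wf: "pnet_wf N"
  using net_system by (simp add: net_system_def)

lemma preE_nonempty: "e \<in> events Q \<Longrightarrow> preE Q e \<noteq> {}"
proof -
  assume e: "e \<in> events Q"
  then have "preT N (hE e) \<noteq> {}" using pnet_wf event_label_trans by (simp add: pnet_wf_def)
  then show ?thesis using bij_betw_preE[OF e] by (auto simp: bij_betw_def)
qed

lemma finite_postE: "e \<in> events Q \<Longrightarrow> finite (postE Q e)"
proof -
  assume e: "e \<in> events Q"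
  have "postT N (hE e) \<subseteq> places N" using pnet_wf by (auto simp: pnet_wf_def postT_def)
  then have "finite (postT N (hE e))" using pnet_wf finite_subset by (auto simp: pnet_wf_def)
  then show ?thesis using bij_betw_finite bij_betw_postE[OF e] by blast
qed

lemma finite_cut: "fconf Q D \<Longrightarrow> finite (cut Q D)"
proof -
  assume "fconf Q D"
  then have "finite (\<Union>e\<in>D. postE Q e)"
    using finite_postE configuration_events by (auto simp: fconf_def)
  moreover have "cut Q D \<subseteq> minC Q \<union> (\<Union>e\<in>D. postE Q e)" by (auto simp: cut_def)
  ultimately show ?thesis using finite_minC finite_subset by blast
qed

lemma mark_empty: "mark Q hC {} = M0"
  using card_minC by (simp add: mark_def cut_def)

lemma mark_insert_event:
  assumes D: "fconf Q D" and e: "e \<in> events Q" and pre: "preE Q e \<subseteq> cut Q D"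
  shows "enabled N (mark Q hC D) (hE e)" "mark Q hC (insert e D) = fire N (mark Q hC D) (hE e)"
proof -
  have fin: "finite (cut Q D)" using finite_cut D .
  have "e \<notin> D" using enabled_event_not_in pre preE_nonempty e by blast
  then have cut_eq: "cut Q (insert e D) = (cut Q D - preE Q e) \<union> postE Q e"
    using cut_insert D pre by (simp add: fconf_def)
  have post_disjoint: "postE Q e \<inter> cut Q D = {}"
    using cut_input_event \<open>e \<notin> D\<close> by (auto simp: postE_def)
  have pre_fiber: "card {b \<in> preE Q e. hC b = p} = (if p \<in> preT N (hE e) then 1 else 0)" for p
    by (rule card_fiber_bij_betw[OF bij_betw_preE[OF e]])
  have post_fiber: "card {b \<in> postE Q e. hC b = p} = (if p \<in> postT N (hE e) then 1 else 0)" for p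
    by (rule card_fiber_bij_betw[OF bij_betw_postE[OF e]])
  show "enabled N (mark Q hC D) (hE e)" unfolding enabled_def mark_def
  proof (intro conjI ballI)
    fix p assume "p \<in> preT N (hE e)"
    then have "1 = card {b \<in> preE Q e. hC b = p}" using pre_fiber by simp
    also have "\<dots> \<le> card {b \<in> cut Q D. hC b = p}" using pre fin by (intro card_mono) auto
    finally show "1 \<le> card {b \<in> cut Q D. hC b = p}" .
  qed (rule event_label_trans[OF e])
  show "mark Q hC (insert e D) = fire N (mark Q hC D) (hE e)"
  proof
    fix p
    let ?fiber = "\<lambda>A. {b \<in> A. hC b = p}"
    have "?fiber (cut Q (insert e D)) = (?fiber (cut Q D) - ?fiber (preE Q e)) \<union> ?fiber (postE Q e)"
      using cut_eq by auto
    moreover have sub: "?fiber (preE Q e) \<subseteq> ?fiber (cut Q D)" using pre by auto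
    moreover have "(?fiber (cut Q D) - ?fiber (preE Q e)) \<inter> ?fiber (postE Q e) = {}"
      using post_disjoint by auto
    moreover have "finite (?fiber (cut Q D))" using fin by simp
    ultimately have "card (?fiber (cut Q (insert e D)))
        = card (?fiber (cut Q D)) - card (?fiber (preE Q e)) + card (?fiber (postE Q e))"
      using finite_postE[OF e] card_Diff_subset[OF finite_subset[OF sub] sub]
      by (simp add: card_Un_disjoint)
    then show "mark Q hC (insert e D) p = fire N (mark Q hC D) (hE e) p"
      unfolding mark_def fire_def pre_fiber post_fiber by simp
  qed
qed

lemma mark_reachable: "fconf Q D \<Longrightarrow> mark Q hC D \<in> reach N M0"
proof (induction "card D" arbitrary: D rule: less_induct)
  case less
  show ?case
  proof (cases "D = {}")
    case True
    then show ?thesis using mark_empty reach.init by simp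
  next
    case False
    have D: "configuration Q D" "finite D" using less.prems by (simp_all add: fconf_def)
    obtain x where x: "x \<in> D" "\<forall>y\<in>D. \<not> causal Q (Inr x) (Inr y)"
      using exists_causal_maximal[OF D(2) False configuration_events[OF D(1)]] by blast
    note smaller = configuration_remove_maximal[OF D(1) x]
    have "fconf Q (D - {x})" using smaller(1) D(2) by (simp add: fconf_def)
    moreover have "card (D - {x}) < card D" using D(2) x(1) by (rule card_Diff1_less)
    ultimately have reachable: "mark Q hC (D - {x}) \<in> reach N M0" using less.hyps by blast
    have "x \<in> events Q" using x(1) configuration_events[OF D(1)] by blast
    note step = mark_insert_event[OF \<open>fconf Q (D - {x})\<close> this smaller(2)]
    have "mark Q hC (insert x (D - {x})) \<in> reach N M0"
      unfolding step(2) by (rule reach.step[OF reachable step(1)])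
    then show ?thesis using x(1) by (simp add: insert_absorb)
  qed
qed

end

locale safe_unfolding =
  fixes N :: "('p,'t) pnet" and M0 :: "'p marking" and Q :: "('b,'e) onet"
    and hC :: "'b \<Rightarrow> 'p" and hE :: "'e \<Rightarrow> 't"
  assumes net_system: "net_system N M0" and one_safe: "one_safe N M0"
    and is_unfolding: "is_unfolding N M0 Q hC hE"

sublocale safe_unfolding \<subseteq> branching_process
  using net_system is_unfolding by unfold_locales (simp_all add: is_unfolding_def)

context safe_unfolding
begin

lemma unfolding_saturated:
  "t \<in> trans N \<Longrightarrow> co_set Q X \<Longrightarrow> bij_betw hC X (preT N t)
    \<Longrightarrow> \<exists>e\<in>events Q. preE Q e = X \<and> hE e = t"
  using is_unfolding by (simp add: is_unfolding_def)

lemma inj_on_cut: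
  assumes D: "fconf Q D"
  shows "inj_on hC (cut Q D)"
proof (rule inj_onI, rule ccontr)
  fix b1 b2 assume b: "b1 \<in> cut Q D" "b2 \<in> cut Q D" "hC b1 = hC b2" "b1 \<noteq> b2"
  then have "card {b1, b2} \<le> card {b \<in> cut Q D. hC b = hC b1}"
    using finite_cut[OF D] by (intro card_mono) auto
  then have "2 \<le> mark Q hC D (hC b1)" using b(4) by (simp add: mark_def)
  moreover have "mark Q hC D (hC b1) \<le> 1"
    using mark_reachable[OF D] one_safe by (simp add: one_safe_def)
  ultimately show False by simp
qed

lemma mark_safe: "fconf Q D \<Longrightarrow> mark Q hC D p = (if p \<in> hC ` cut Q D then 1 else 0)"
  unfolding mark_def using inj_on_cut
  by (intro card_fiber_bij_betw) (simp add: bij_betw_def)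

lemma mark_eq_iff:
  assumes "fconf Q A" "fconf Q B"
  shows "mark Q hC A = mark Q hC B \<longleftrightarrow> hC ` cut Q A = hC ` cut Q B"
proof
  assume "mark Q hC A = mark Q hC B"
  then have "p \<in> hC ` cut Q A \<longleftrightarrow> p \<in> hC ` cut Q B" for p
    using mark_safe[OF assms(1), of p] mark_safe[OF assms(2), of p] by (metis zero_neq_one)
  then show "hC ` cut Q A = hC ` cut Q B" by blast
qed (simp add: mark_safe assms fun_eq_iff)

lemma enabled_mark_iff:
  "fconf Q D \<Longrightarrow> enabled N (mark Q hC D) t \<longleftrightarrow> t \<in> trans N \<and> preT N t \<subseteq> hC ` cut Q D"
  by (simp add: enabled_def mark_safe subset_eq)

lemma enabled_transition_event:
  assumes D: "fconf Q D" and "enabled N (mark Q hC D) t"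
  obtains e where "e \<in> events Q" "hE e = t" "preE Q e = {b \<in> cut Q D. hC b \<in> preT N t}"
proof -
  let ?X = "{b \<in> cut Q D. hC b \<in> preT N t}"
  have t: "t \<in> trans N" "preT N t \<subseteq> hC ` cut Q D" using assms enabled_mark_iff by blast+
  have "co_set Q ?X" using co_set_cut D by (auto simp: co_set_def fconf_def)
  moreover have "inj_on hC ?X" by (rule inj_on_subset[OF inj_on_cut[OF D]]) auto
  with t(2) have "bij_betw hC ?X (preT N t)" by (auto simp: bij_betw_def)
  ultimately show thesis using unfolding_saturated[OF t(1)] that by blast
qed

lemma reachable_mark_configuration: "M \<in> reach N M0 \<Longrightarrow> \<exists>D. fconf Q D \<and> mark Q hC D = M"
proof (induction rule: reach.induct)
  case init
  then show ?case using configuration_empty mark_empty by (auto simp: fconf_def)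
next
  case (step M t)
  then obtain D where D: "fconf Q D" "mark Q hC D = M" by blast
  then obtain e where e: "e \<in> events Q" "hE e = t" "preE Q e = {b \<in> cut Q D. hC b \<in> preT N t}"
    using enabled_transition_event step.hyps(2) by blast
  then have pre: "preE Q e \<subseteq> cut Q D" by blast
  have "fconf Q (insert e D)"
    using configuration_insert[OF _ e(1) pre] D(1) by (simp add: fconf_def)
  then show ?case using mark_insert_event(2)[OF D(1) e(1) pre] e(2) D(2) by blast
qed

end

section \<open>Isomorphic futures of configurations with equal markings\<close>

context safe_unfolding
begin

text \<open>For configurations \<open>C1\<close>, \<open>C2\<close> with the same marking, \<open>fut_corr C1 C2\<close> is the graph of the
  isomorphism between their futures: matching cut conditions by label, then events whose presets
  correspond, then the output conditions of corresponding events by label.\<close>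

inductive fut_corr :: "'e set \<Rightarrow> 'e set \<Rightarrow> 'b + 'e \<Rightarrow> 'b + 'e \<Rightarrow> bool" for C1 C2 where
  cut: "b \<in> cut Q C1 \<Longrightarrow> b' \<in> cut Q C2 \<Longrightarrow> hC b = hC b' \<Longrightarrow> fut_corr C1 C2 (Inl b) (Inl b')"
| event: "e \<in> events Q \<Longrightarrow> e' \<in> events Q \<Longrightarrow> hE e = hE e'
    \<Longrightarrow> rel_set (\<lambda>b b'. fut_corr C1 C2 (Inl b) (Inl b')) (preE Q e) (preE Q e')
    \<Longrightarrow> fut_corr C1 C2 (Inr e) (Inr e')"
| post: "fut_corr C1 C2 (Inr e) (Inr e') \<Longrightarrow> (e, b) \<in> arcs_eb Q \<Longrightarrow> (e', b') \<in> arcs_eb Q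
    \<Longrightarrow> hC b = hC b' \<Longrightarrow> fut_corr C1 C2 (Inl b) (Inl b')"
monos rel_set_mono

lemma fut_corr_sym: "fut_corr C1 C2 x y \<Longrightarrow> fut_corr C2 C1 y x"
proof (induction rule: fut_corr.induct)
  case (event e e')
  then show ?case by (intro fut_corr.event) (auto simp: rel_set_def)
qed (auto intro: fut_corr.cut fut_corr.post)

lemma fut_corr_EventE:
  assumes "fut_corr C1 C2 (Inr e) y"
  obtains e' where "y = Inr e'" "e \<in> events Q" "e' \<in> events Q" "hE e = hE e'"
    "rel_set (\<lambda>b b'. fut_corr C1 C2 (Inl b) (Inl b')) (preE Q e) (preE Q e')"
  using assms by (cases rule: fut_corr.cases) auto

lemma fut_corr_CondE:
  assumes "fut_corr C1 C2 (Inl b) y"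
  obtains b' where "y = Inl b'" "hC b = hC b'" "b \<in> cut Q C1" "b' \<in> cut Q C2"
  | e e' b' where "y = Inl b'" "hC b = hC b'" "fut_corr C1 C2 (Inr e) (Inr e')"
      "(e, b) \<in> arcs_eb Q" "(e', b') \<in> arcs_eb Q"
  using assms by (cases rule: fut_corr.cases) auto

lemma fut_corr_label: "fut_corr C1 C2 (Inl b) (Inl b') \<Longrightarrow> hC b = hC b'"
  by (auto elim: fut_corr_CondE)

lemma fut_corr_event_label: "fut_corr C1 C2 (Inr e) (Inr e') \<Longrightarrow> hE e = hE e'"
  by (auto elim: fut_corr_EventE)

lemma fut_corr_in_futures:
  assumes C1: "configuration Q C1" and C2: "configuration Q C2"
  shows "fut_corr C1 C2 x y \<Longrightarrow> x \<in> Inl ` fut_conds Q C1 \<union> Inr ` fut_events Q C1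
    \<and> y \<in> Inl ` fut_conds Q C2 \<union> Inr ` fut_events Q C2"
proof (induction rule: fut_corr.induct)
  case (cut b b')
  then show ?case using cut_subset_fut_conds[OF C1] cut_subset_fut_conds[OF C2] by blast
next
  case (event e e')
  then have "preE Q e \<subseteq> fut_conds Q C1" "preE Q e' \<subseteq> fut_conds Q C2"
    by (auto simp: rel_set_def)
  then show ?case
    using fut_eventsI[OF C1 event.hyps(1) preE_nonempty[OF event.hyps(1)]]
      fut_eventsI[OF C2 event.hyps(2) preE_nonempty[OF event.hyps(2)]] by blast
next
  case (post e e' b b')
  then show ?case
    using post_in_fut_conds[OF C1 _ post.hyps(2)] post_in_fut_conds[OF C2 _ post.hyps(3)] by blast
qed

lemma fut_corr_fut_events:
  assumes "configuration Q C1" "configuration Q C2" "fut_corr C1 C2 (Inr e) (Inr e')"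
  shows "e \<in> fut_events Q C1" "e' \<in> fut_events Q C2"
  using fut_corr_in_futures[OF assms] by auto

lemma fut_corr_fut_conds:
  assumes "configuration Q C1" "configuration Q C2" "fut_corr C1 C2 (Inl b) (Inl b')"
  shows "b \<in> fut_conds Q C1" "b' \<in> fut_conds Q C2"
  using fut_corr_in_futures[OF assms] by auto

lemma cut_not_post_fut_event:
  assumes C1: "configuration Q C1" and C2: "configuration Q C2"
    and "b \<in> cut Q C1" "(e, b) \<in> arcs_eb Q"
  shows "\<not> fut_corr C1 C2 (Inr e) y"
proof
  assume corr: "fut_corr C1 C2 (Inr e) y"
  then obtain e' where "y = Inr e'" by (rule fut_corr_EventE)
  then have "e \<in> fut_events Q C1" using fut_corr_fut_events[OF C1 C2] corr by blast
  moreover have "e \<in> C1" using cut_input_event assms(3,4) .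
  ultimately show False by (simp add: fut_events_def)
qed

lemma fut_corr_functional:
  assumes C1: "configuration Q C1" and C2: "fconf Q C2"
  shows "fut_corr C1 C2 x y \<Longrightarrow> fut_corr C1 C2 x z \<Longrightarrow> y = z"
proof (induction arbitrary: z rule: fut_corr.induct)
  case (cut b b')
  have C2': "configuration Q C2" using C2 by (simp add: fconf_def)
  from cut.prems show ?case
  proof (cases rule: fut_corr_CondE)
    case (1 b'')
    then show ?thesis using inj_onD[OF inj_on_cut[OF C2]] cut.hyps by auto
  next
    case (2 e e' b'')
    then show ?thesis using cut_not_post_fut_event[OF C1 C2'] cut.hyps(1) by blast
  qed
next
  case (event e e')
  obtain e'' where e'': "z = Inr e''" "e'' \<in> events Q" "hE e = hE e''"
    "rel_set (\<lambda>b b'. fut_corr C1 C2 (Inl b) (Inl b')) (preE Q e) (preE Q e'')"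
    using event.prems by (rule fut_corr_EventE)
  have pre_rel: "rel_set (\<lambda>b b'. fut_corr C1 C2 (Inl b) (Inl b')) (preE Q e) (preE Q e')"
    using event.IH unfolding rel_set_def by blast
  have functional: "y = z" if "b \<in> preE Q e" "fut_corr C1 C2 (Inl b) (Inl y)"
    "fut_corr C1 C2 (Inl b) (Inl z)" for b y z
    using rel_setD1[OF event.IH that(1)] that(2,3) by blast
  \<comment> \<open>corresponding presets determine each other, and an event is determined by preset and label\<close>
  have "preE Q e' = preE Q e''" by (rule rel_set_unique_right[OF pre_rel e''(4) functional])
  then show ?case using events_eqI event.hyps e'' by simp
next
  case (post e e' b b')
  have C2': "configuration Q C2" using C2 by (simp add: fconf_def)
  from post.prems show ?case
  proof (cases rule: fut_corr_CondE)
    case 1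
    then show ?thesis using cut_not_post_fut_event[OF C1 C2'] post.hyps(1,2) by blast
  next
    case (2 e0 e0' b'')
    then have "e0 = e" using input_event_unique post.hyps(2) by blast
    then have "e0' = e'" using post.IH 2(3) by blast
    then have "b' \<in> postE Q e'" "b'' \<in> postE Q e'" "hC b' = hC b''"
      using post.hyps 2 by (auto simp: postE_def)
    moreover have "e' \<in> events Q" using post.hyps(1) by (rule fut_corr_EventE) simp
    ultimately show ?thesis
      using inj_onD[OF bij_betw_imp_inj_on[OF bij_betw_postE]] 2(1) by blast
  qed
qed

lemma fut_corr_injective:
  "fconf Q C1 \<Longrightarrow> configuration Q C2 \<Longrightarrow> fut_corr C1 C2 x z \<Longrightarrow> fut_corr C1 C2 y z \<Longrightarrow> x = y"
  using fut_corr_functional fut_corr_sym by blast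

lemma fut_corr_output:
  assumes C1: "configuration Q C1" and C2: "fconf Q C2"
    and b: "fut_corr C1 C2 (Inl b) (Inl b')" and e: "fut_corr C1 C2 (Inr e) (Inr e')"
    and eb: "(e, b) \<in> arcs_eb Q"
  shows "(e', b') \<in> arcs_eb Q"
  using b
proof (cases rule: fut_corr_CondE)
  case 1
  moreover have "configuration Q C2" using C2 by (simp add: fconf_def)
  ultimately show ?thesis using cut_not_post_fut_event[OF C1] e eb by blast
next
  case (2 e0 e0' b'')
  then have "e0 = e" using input_event_unique eb by blast
  then have "Inr e' = Inr e0'" using fut_corr_functional[OF C1 C2 e] 2(3) by blast
  then show ?thesis using 2 by simp
qed

lemma fut_corr_rel_set_postE:
  assumes corr: "fut_corr C1 C2 (Inr x) (Inr x')"
  shows "rel_set (\<lambda>b b'. fut_corr C1 C2 (Inl b) (Inl b')) (postE Q x) (postE Q x')"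
proof -
  have "x \<in> events Q" "x' \<in> events Q" "hE x = hE x'" using corr by (auto elim: fut_corr_EventE)
  then have labels: "hC ` postE Q x = hC ` postE Q x'"
    using bij_betw_postE by (simp add: bij_betw_def)
  show ?thesis
  proof (rule rel_setI)
    fix b assume b: "b \<in> postE Q x"
    then obtain b' where "b' \<in> postE Q x'" "hC b = hC b'" using labels by (metis imageE imageI)
    then show "\<exists>b'\<in>postE Q x'. fut_corr C1 C2 (Inl b) (Inl b')"
      using fut_corr.post[OF corr] b by (auto simp: postE_def)
  next
    fix b' assume b': "b' \<in> postE Q x'"
    then obtain b where "b \<in> postE Q x" "hC b = hC b'" using labels by (metis imageE imageI)
    then show "\<exists>b\<in>postE Q x. fut_corr C1 C2 (Inl b) (Inl b')"
      using fut_corr.post[OF corr] b' by (auto simp: postE_def)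
  qed
qed

definition corresponding_extensions :: "'e set \<Rightarrow> 'e set \<Rightarrow> 'e set \<Rightarrow> 'e set \<Rightarrow> bool" where
  "corresponding_extensions C1 C2 D1 D2 \<longleftrightarrow> fconf Q D2 \<and> C2 \<subseteq> D2
     \<and> rel_set (\<lambda>e e'. fut_corr C1 C2 (Inr e) (Inr e')) (D1 - C1) (D2 - C2)
     \<and> rel_set (\<lambda>b b'. fut_corr C1 C2 (Inl b) (Inl b')) (cut Q D1) (cut Q D2)"

lemma corresponding_extensions_refl:
  assumes C1: "fconf Q C1" and C2: "fconf Q C2" and marks: "mark Q hC C1 = mark Q hC C2"
  shows "corresponding_extensions C1 C2 C1 C2"
proof -
  have labels: "hC ` cut Q C1 = hC ` cut Q C2" using marks mark_eq_iff C1 C2 by blast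
  have "rel_set (\<lambda>b b'. fut_corr C1 C2 (Inl b) (Inl b')) (cut Q C1) (cut Q C2)"
  proof (rule rel_setI)
    fix b assume "b \<in> cut Q C1"
    moreover from this obtain b' where "b' \<in> cut Q C2" "hC b = hC b'" using labels by blast
    ultimately show "\<exists>b'\<in>cut Q C2. fut_corr C1 C2 (Inl b) (Inl b')" by (blast intro: fut_corr.cut)
  next
    fix b' assume "b' \<in> cut Q C2"
    moreover from this obtain b where "b \<in> cut Q C1" "hC b = hC b'"
      using labels by (metis imageE imageI)
    ultimately show "\<exists>b\<in>cut Q C1. fut_corr C1 C2 (Inl b) (Inl b')" by (blast intro: fut_corr.cut)
  qed
  then show ?thesis using C2 by (simp add: corresponding_extensions_def rel_set_def)
qed

lemma fut_corr_matching_event: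
  assumes D2: "fconf Q D2" and x: "x \<in> events Q"
    and matched: "\<forall>b\<in>preE Q x. \<exists>b'\<in>cut Q D2. fut_corr C1 C2 (Inl b) (Inl b')"
  obtains x' where "x' \<in> events Q" "fut_corr C1 C2 (Inr x) (Inr x')"
    "preE Q x' = {b' \<in> cut Q D2. \<exists>b\<in>preE Q x. fut_corr C1 C2 (Inl b) (Inl b')}"
proof -
  let ?X = "{b' \<in> cut Q D2. \<exists>b\<in>preE Q x. fut_corr C1 C2 (Inl b) (Inl b')}"
  have "co_set Q ?X" using co_set_cut D2 by (auto simp: co_set_def fconf_def)
  moreover have "inj_on hC ?X" by (rule inj_on_subset[OF inj_on_cut[OF D2]]) auto
  moreover have "hC ` ?X = hC ` preE Q x"
  proof (intro equalityI subsetI)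
    fix p assume "p \<in> hC ` ?X"
    then obtain b b' where "b \<in> preE Q x" "fut_corr C1 C2 (Inl b) (Inl b')" "p = hC b'" by blast
    then show "p \<in> hC ` preE Q x" using fut_corr_label by (metis image_eqI)
  next
    fix p assume "p \<in> hC ` preE Q x"
    then obtain b where b: "b \<in> preE Q x" "p = hC b" by blast
    then obtain b' where "b' \<in> cut Q D2" "fut_corr C1 C2 (Inl b) (Inl b')" using matched by blast
    then show "p \<in> hC ` ?X"
      using b fut_corr_label by (metis (mono_tags, lifting) image_eqI mem_Collect_eq)
  qed
  moreover have "hC ` preE Q x = preT N (hE x)"
    using bij_betw_preE[OF x] by (simp add: bij_betw_def)
  ultimately have "co_set Q ?X" "bij_betw hC ?X (preT N (hE x))" by (simp_all add: bij_betw_def)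
  then obtain x' where x': "x' \<in> events Q" "preE Q x' = ?X" "hE x' = hE x"
    using unfolding_saturated[OF event_label_trans[OF x]] by blast
  have "rel_set (\<lambda>b b'. fut_corr C1 C2 (Inl b) (Inl b')) (preE Q x) (preE Q x')"
    using matched x'(2) unfolding rel_set_def by blast
  then have "fut_corr C1 C2 (Inr x) (Inr x')" using x x' by (simp add: fut_corr.event)
  then show thesis using that x' by blast
qed

lemma corresponding_extensions_insert:
  assumes C1: "fconf Q C1" and C2: "fconf Q C2" and corr: "corresponding_extensions C1 C2 D1 D2"
    and D1: "fconf Q D1" "C1 \<subseteq> D1" and x: "x \<in> events Q" and pre: "preE Q x \<subseteq> cut Q D1"
  shows "\<exists>D2'. corresponding_extensions C1 C2 (insert x D1) D2'"
proof -
  let ?corr_cond = "\<lambda>b b'. fut_corr C1 C2 (Inl b) (Inl b')"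
  have D2: "fconf Q D2" "C2 \<subseteq> D2"
    and events_rel: "rel_set (\<lambda>e e'. fut_corr C1 C2 (Inr e) (Inr e')) (D1 - C1) (D2 - C2)"
    and cuts_rel: "rel_set ?corr_cond (cut Q D1) (cut Q D2)"
    using corr by (simp_all add: corresponding_extensions_def)
  obtain x' where x': "x' \<in> events Q" "fut_corr C1 C2 (Inr x) (Inr x')"
      "preE Q x' = {b' \<in> cut Q D2. \<exists>b\<in>preE Q x. ?corr_cond b b'}"
    using fut_corr_matching_event[OF D2(1) x] pre rel_setD1[OF cuts_rel] by blast
  have pre': "preE Q x' \<subseteq> cut Q D2" using x'(3) by blast
  have "x \<notin> D1" "x' \<notin> D2" using enabled_event_not_in pre pre' preE_nonempty x x'(1) by blast+
  have "configuration Q C2" using C2 by (simp add: fconf_def)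
  then have "rel_set ?corr_cond (cut Q D1 - preE Q x) (cut Q D2 - preE Q x')"
    unfolding x'(3) using rel_set_Diff_related[OF cuts_rel pre]
    by (metis fut_corr_injective[OF C1] sum.inject(1))
  moreover note fut_corr_rel_set_postE[OF x'(2)]
  ultimately have "rel_set ?corr_cond (cut Q (insert x D1)) (cut Q (insert x' D2))"
    using cut_insert \<open>x \<notin> D1\<close> \<open>x' \<notin> D2\<close> pre pre' D1(1) D2(1) rel_set_Un
    by (simp add: fconf_def Un_commute)
  moreover have "rel_set (\<lambda>e e'. fut_corr C1 C2 (Inr e) (Inr e'))
      (insert x D1 - C1) (insert x' D2 - C2)"
    using events_rel x'(2) \<open>x \<notin> D1\<close> \<open>x' \<notin> D2\<close> D1(2) D2(2) by (auto simp: rel_set_def)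
  moreover have "fconf Q (insert x' D2)"
    using configuration_insert x'(1) pre' D2(1) by (simp add: fconf_def)
  ultimately show ?thesis using D2(2) unfolding corresponding_extensions_def by blast
qed

lemma corresponding_extension_exists:
  assumes C1: "fconf Q C1" and C2: "fconf Q C2" and marks: "mark Q hC C1 = mark Q hC C2"
  shows "fconf Q D1 \<Longrightarrow> C1 \<subseteq> D1 \<Longrightarrow> \<exists>D2. corresponding_extensions C1 C2 D1 D2"
proof (induction "card (D1 - C1)" arbitrary: D1 rule: less_induct)
  case less
  show ?case
  proof (cases "D1 = C1")
    case True
    then show ?thesis using corresponding_extensions_refl[OF C1 C2 marks] by blast
  next
    case False
    have D1: "configuration Q D1" "finite D1" using less.prems(1) by (simp_all add: fconf_def)
    have "finite (D1 - C1)" "D1 - C1 \<noteq> {}" "D1 - C1 \<subseteq> events Q"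
      using D1 False less.prems(2) configuration_events by auto
    then obtain x where x: "x \<in> D1 - C1" "\<forall>y\<in>D1 - C1. \<not> causal Q (Inr x) (Inr y)"
      using exists_causal_maximal by blast
    have "x \<in> D1" "x \<in> events Q" using x(1) configuration_events[OF D1(1)] by blast+
    \<comment> \<open>\<open>x\<close> is maximal in all of \<open>D1\<close>, since \<open>C1\<close> is causally closed\<close>
    have "configuration Q C1" using C1 by (simp add: fconf_def)
    then have "\<forall>y\<in>D1. \<not> causal Q (Inr x) (Inr y)"
      using x \<open>x \<in> events Q\<close> unfolding configuration_def by blast
    note smaller = configuration_remove_maximal[OF D1(1) \<open>x \<in> D1\<close> this]
    have "D1 - {x} - C1 = (D1 - C1) - {x}" by blast
    then have "card (D1 - {x} - C1) < card (D1 - C1)"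
      using card_Diff1_less[OF \<open>finite (D1 - C1)\<close> x(1)] by simp
    moreover have "fconf Q (D1 - {x})" "C1 \<subseteq> D1 - {x}"
      using smaller(1) x(1) D1(2) less.prems(2) by (auto simp: fconf_def)
    ultimately obtain D2 where "corresponding_extensions C1 C2 (D1 - {x}) D2"
      using less.hyps by blast
    from corresponding_extensions_insert[OF C1 C2 this \<open>fconf Q (D1 - {x})\<close> \<open>C1 \<subseteq> D1 - {x}\<close>
        \<open>x \<in> events Q\<close> smaller(2)]
    show ?thesis using x(1) by (simp add: insert_absorb)
  qed
qed

lemma fut_corr_total_events:
  assumes C1: "fconf Q C1" and C2: "fconf Q C2" and marks: "mark Q hC C1 = mark Q hC C2"
    and e: "e \<in> fut_events Q C1"
  shows "\<exists>e'. fut_corr C1 C2 (Inr e) (Inr e')"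
proof -
  have e_ev: "e \<in> events Q" "e \<notin> C1" using e by (auto simp: fut_events_def)
  have "fconf Q (C1 \<union> local_config Q e)"
    using configuration_Un_local_config e C1 fconf_local_config[OF e_ev(1)] by (simp add: fconf_def)
  then obtain D2 where "corresponding_extensions C1 C2 (C1 \<union> local_config Q e) D2"
    using corresponding_extension_exists[OF C1 C2 marks] by blast
  moreover have "e \<in> (C1 \<union> local_config Q e) - C1" using e_ev local_config_self by blast
  ultimately show ?thesis by (auto simp: corresponding_extensions_def dest: rel_setD1)
qed

lemma fut_corr_total_conds:
  assumes C1: "fconf Q C1" and C2: "fconf Q C2" and marks: "mark Q hC C1 = mark Q hC C2"
    and b: "b \<in> fut_conds Q C1"
  shows "\<exists>b'. fut_corr C1 C2 (Inl b) (Inl b')"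
proof (cases "b \<in> cut Q C1")
  case True
  then show ?thesis using corresponding_extensions_refl[OF C1 C2 marks]
    by (auto simp: corresponding_extensions_def dest: rel_setD1)
next
  case False
  \<comment> \<open>a future condition outside the cut is produced by a future event\<close>
  then obtain e where eb: "(e, b) \<in> arcs_eb Q" and "e \<notin> C1"
    using b by (auto simp: fut_conds_def cut_def minC_def preC_def postE_def)
  have "(Inr e, Inl b) \<in> F\<^sup>*" using eb by (intro r_into_rtrancl) simp
  then have "\<not> conflict Q (Inr e) (Inr c)" if "c \<in> C1" for c
    using b that conflict_rtrancl_left[of "Inr e" "Inr c" "Inl b"] by (auto simp: fut_conds_def)
  then have "e \<in> fut_events Q C1"
    using eb \<open>e \<notin> C1\<close> arcs_eb_subset by (auto simp: fut_events_def)
  then obtain e' where corr: "fut_corr C1 C2 (Inr e) (Inr e')"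
    using fut_corr_total_events[OF C1 C2 marks] by blast
  then have "e \<in> events Q" "e' \<in> events Q" "hE e = hE e'" by (auto elim: fut_corr_EventE)
  then have "hC ` postE Q e = hC ` postE Q e'" using bij_betw_postE by (simp add: bij_betw_def)
  then obtain b' where "b' \<in> postE Q e'" "hC b = hC b'"
    using eb by (auto simp: postE_def)
  then show ?thesis using fut_corr.post[OF corr eb] by (auto simp: postE_def)
qed

lemma fut_corr_rel_set_events:
  assumes C1: "fconf Q C1" and C2: "fconf Q C2" and marks: "mark Q hC C1 = mark Q hC C2"
  shows "rel_set (\<lambda>e e'. fut_corr C1 C2 (Inr e) (Inr e')) (fut_events Q C1) (fut_events Q C2)"
proof (rule rel_setI_total)
  have conf: "configuration Q C1" "configuration Q C2" using C1 C2 by (simp_all add: fconf_def)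
  show "\<exists>e'. fut_corr C1 C2 (Inr e) (Inr e')" if "e \<in> fut_events Q C1" for e
    using fut_corr_total_events[OF C1 C2 marks that] .
  show "\<exists>e. fut_corr C1 C2 (Inr e) (Inr e')" if "e' \<in> fut_events Q C2" for e'
    using fut_corr_total_events[OF C2 C1 marks[symmetric] that] fut_corr_sym by blast
  show "e \<in> fut_events Q C1 \<and> e' \<in> fut_events Q C2" if "fut_corr C1 C2 (Inr e) (Inr e')" for e e'
    using fut_corr_fut_events[OF conf that] by blast
qed

lemma fut_corr_rel_set_conds:
  assumes C1: "fconf Q C1" and C2: "fconf Q C2" and marks: "mark Q hC C1 = mark Q hC C2"
  shows "rel_set (\<lambda>b b'. fut_corr C1 C2 (Inl b) (Inl b')) (fut_conds Q C1) (fut_conds Q C2)"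
proof (rule rel_setI_total)
  have conf: "configuration Q C1" "configuration Q C2" using C1 C2 by (simp_all add: fconf_def)
  show "\<exists>b'. fut_corr C1 C2 (Inl b) (Inl b')" if "b \<in> fut_conds Q C1" for b
    using fut_corr_total_conds[OF C1 C2 marks that] .
  show "\<exists>b. fut_corr C1 C2 (Inl b) (Inl b')" if "b' \<in> fut_conds Q C2" for b'
    using fut_corr_total_conds[OF C2 C1 marks[symmetric] that] fut_corr_sym by blast
  show "b \<in> fut_conds Q C1 \<and> b' \<in> fut_conds Q C2" if "fut_corr C1 C2 (Inl b) (Inl b')" for b b'
    using fut_corr_fut_conds[OF conf that] by blast
qed

lemma fut_corr_arcs_iff:
  assumes C1: "fconf Q C1" and C2: "fconf Q C2"
    and b: "fut_corr C1 C2 (Inl b) (Inl b')" and e: "fut_corr C1 C2 (Inr e) (Inr e')"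
  shows "(b, e) \<in> arcs_be Q \<longleftrightarrow> (b', e') \<in> arcs_be Q" "(e, b) \<in> arcs_eb Q \<longleftrightarrow> (e', b') \<in> arcs_eb Q"
proof -
  have conf: "configuration Q C1" "configuration Q C2" using C1 C2 by (simp_all add: fconf_def)
  have pre: "rel_set (\<lambda>b b'. fut_corr C1 C2 (Inl b) (Inl b')) (preE Q e) (preE Q e')"
    using e by (auto elim: fut_corr_EventE)
  show "(b, e) \<in> arcs_be Q \<longleftrightarrow> (b', e') \<in> arcs_be Q"
  proof
    assume "(b, e) \<in> arcs_be Q"
    then obtain b'' where "b'' \<in> preE Q e'" "fut_corr C1 C2 (Inl b) (Inl b'')"
      using rel_setD1[OF pre] by (auto simp: preE_def)
    then show "(b', e') \<in> arcs_be Q"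
      using fut_corr_functional[OF conf(1) C2 b] by (auto simp: preE_def)
  next
    assume "(b', e') \<in> arcs_be Q"
    then obtain b0 where "b0 \<in> preE Q e" "fut_corr C1 C2 (Inl b0) (Inl b')"
      using rel_setD2[OF pre] by (auto simp: preE_def)
    then show "(b, e) \<in> arcs_be Q"
      using fut_corr_injective[OF C1 conf(2) _ b] by (auto simp: preE_def)
  qed
  show "(e, b) \<in> arcs_eb Q \<longleftrightarrow> (e', b') \<in> arcs_eb Q"
    using fut_corr_output[OF conf(1) C2 b e]
      fut_corr_output[OF conf(2) C1 fut_corr_sym[OF b] fut_corr_sym[OF e]] by blast
qed

lemma fut_iso_exists:
  assumes C1: "fconf Q C1" and C2: "fconf Q C2" and marks: "mark Q hC C1 = mark Q hC C2"
  obtains fB fE where "fut_iso Q hC hE C1 C2 fB fE"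
    "\<forall>e\<in>fut_events Q C1. fut_corr C1 C2 (Inr e) (Inr (fE e))"
proof -
  have conf: "configuration Q C1" "configuration Q C2" using C1 C2 by (simp_all add: fconf_def)
  define fB where "fB b = (SOME b'. fut_corr C1 C2 (Inl b) (Inl b'))" for b
  define fE where "fE e = (SOME e'. fut_corr C1 C2 (Inr e) (Inr e'))" for e
  note conds_rel = fut_corr_rel_set_conds[OF C1 C2 marks]
    and events_rel = fut_corr_rel_set_events[OF C1 C2 marks]
  have corr_fB: "fut_corr C1 C2 (Inl b) (Inl (fB b))" if "b \<in> fut_conds Q C1" for b
    unfolding fB_def by (rule someI_ex) (use rel_setD1[OF conds_rel that] in blast)
  have corr_fE: "fut_corr C1 C2 (Inr e) (Inr (fE e))" if "e \<in> fut_events Q C1" for e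
    unfolding fE_def by (rule someI_ex) (use rel_setD1[OF events_rel that] in blast)
  have "bij_betw fB (fut_conds Q C1) (fut_conds Q C2)" unfolding fB_def
    using conds_rel fut_corr_fut_conds[OF conf] fut_corr_functional[OF conf(1) C2]
      fut_corr_injective[OF C1 conf(2)] by (intro bij_betw_SOME_rel) blast+
  moreover have "bij_betw fE (fut_events Q C1) (fut_events Q C2)" unfolding fE_def
    using events_rel fut_corr_fut_events[OF conf] fut_corr_functional[OF conf(1) C2]
      fut_corr_injective[OF C1 conf(2)] by (intro bij_betw_SOME_rel) blast+
  moreover have "\<forall>b\<in>fut_conds Q C1. hC (fB b) = hC b" using corr_fB fut_corr_label by metis
  moreover have "\<forall>e\<in>fut_events Q C1. hE (fE e) = hE e" using corr_fE fut_corr_event_label by metis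
  moreover have "\<forall>b\<in>fut_conds Q C1. \<forall>e\<in>fut_events Q C1.
      ((b, e) \<in> arcs_be Q \<longleftrightarrow> (fB b, fE e) \<in> arcs_be Q)
      \<and> ((e, b) \<in> arcs_eb Q \<longleftrightarrow> (fE e, fB b) \<in> arcs_eb Q)"
    using fut_corr_arcs_iff[OF C1 C2 corr_fB corr_fE] by blast
  ultimately show thesis using that corr_fE unfolding fut_iso_def by blast
qed

end

section \<open>Completeness of the prefix and transition adjacency\<close>

context safe_unfolding
begin

lemma cutoff_shift:
  assumes adequate: "adequate_order Q hC hE R" and C: "fconf Q C" and e: "e \<in> C"
    and cutoff: "cutoff Q hC R e"
  obtains D where "fconf Q D" "mark Q hC D = mark Q hC C" "R D C"
proof -
  define L where "L = local_config Q e"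
  obtain e' where e': "e' \<in> events Q" "mark Q hC (local_config Q e') = mark Q hC L"
      "R (local_config Q e') L"
    using cutoff by (auto simp: cutoff_def L_def)
  define L' where "L' = local_config Q e'"
  have "e \<in> events Q" using cutoff by (simp add: cutoff_def)
  then have L: "fconf Q L" "L \<subseteq> C" and L': "fconf Q L'"
    using fconf_local_config[of e] fconf_local_config[OF e'(1)] local_config_subset[OF _ e] C
    unfolding L_def L'_def fconf_def by blast+
  have marks: "mark Q hC L = mark Q hC L'" using e'(2) by (simp add: L'_def)
  obtain D where D: "fconf Q D" "L' \<subseteq> D"
    and events_rel: "rel_set (\<lambda>c x. fut_corr L L' (Inr c) (Inr x)) (C - L) (D - L')"
    and cuts_rel: "rel_set (\<lambda>b b'. fut_corr L L' (Inl b) (Inl b')) (cut Q C) (cut Q D)"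
    using corresponding_extension_exists[OF L(1) L' marks C L(2)]
    unfolding corresponding_extensions_def by (elim exE conjE)
  have "hC ` cut Q C = hC ` cut Q D" using rel_set_image_eq[OF cuts_rel] fut_corr_label by blast
  then have "mark Q hC D = mark Q hC C" using mark_eq_iff[OF D(1) C] by simp
  moreover have "R D C"
  proof -
    obtain fB fE where iso: "fut_iso Q hC hE L' L fB fE"
      and corr_fE: "\<forall>x\<in>fut_events Q L'. fut_corr L' L (Inr x) (Inr (fE x))"
      using fut_iso_exists[OF L' L(1) marks[symmetric]] by blast
    have conf: "configuration Q L" "configuration Q L'" using L L' by (simp_all add: fconf_def)
    \<comment> \<open>the future isomorphism carries the extension \<open>D - L'\<close> of \<open>L'\<close> exactly onto \<open>C - L\<close>\<close>
    have fE_corr: "x \<in> fut_events Q L'" "fE x = c" if corr: "fut_corr L L' (Inr c) (Inr x)" for c x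
    proof -
      show x: "x \<in> fut_events Q L'" using fut_corr_fut_events(2)[OF conf corr] .
      have "Inr (fE x) = Inr c"
        using corr_fE x fut_corr_functional[OF conf(2) L(1)] fut_corr_sym[OF corr] by blast
      then show "fE x = c" by simp
    qed
    have fut: "D - L' \<subseteq> fut_events Q L'" using rel_setD2[OF events_rel] fE_corr(1) by blast
    have image: "fE ` (D - L') = C - L"
      using rel_set_image_eq[OF events_rel, of id fE] fE_corr(2) by simp
    have "R L' L" using e'(3) by (simp add: L'_def)
    moreover have "finite (D - L')" "configuration Q (L' \<union> (D - L'))"
      using D by (simp_all add: fconf_def Un_absorb1)
    ultimately have "R (L' \<union> (D - L')) (L \<union> fE ` (D - L'))"
      using adequate_order_extension[OF adequate _ marks[symmetric] iso _ fut] by blast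
    then show "R D C" using D(2) L(2) image by (simp add: Un_absorb1)
  qed
  ultimately show thesis using that D(1) by blast
qed

lemma reachable_cutoff_free_configuration:
  assumes adequate: "adequate_order Q hC hE R" and M: "M \<in> reach N M0"
  obtains C where "fconf Q C" "mark Q hC C = M" "\<forall>e\<in>C. \<not> cutoff Q hC R e"
proof -
  let ?S = "{C. fconf Q C \<and> mark Q hC C = M}"
  obtain C0 where "C0 \<in> ?S" using reachable_mark_configuration[OF M] by blast
  then obtain C where C: "fconf Q C" "mark Q hC C = M" and minimal: "\<And>D. R D C \<Longrightarrow> D \<notin> ?S"
    by (rule wfE_min[OF adequate_order_wf[OF adequate]]) auto
  have "\<not> cutoff Q hC R e" if e: "e \<in> C" for e
  proof
    assume "cutoff Q hC R e"
    then obtain D where "fconf Q D" "mark Q hC D = mark Q hC C" "R D C"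
      by (rule cutoff_shift[OF adequate C(1) e])
    then show False using minimal C(2) by blast
  qed
  then show thesis using that C by blast
qed

lemma co_events_tar:
  assumes e1: "e1 \<in> events Q" and e2: "e2 \<in> events Q" and "e1 \<noteq> e2"
    and co: "co Q (Inr e1) (Inr e2)"
  shows "tar N M0 (hE e1) (hE e2)" "postT N (hE e1) \<inter> preT N (hE e2) = {}"
proof -
  obtain D where D: "fconf Q D" "preE Q e1 \<subseteq> cut Q D" "e1 \<notin> D"
      "fconf Q (insert e1 D)" "preE Q e2 \<subseteq> cut Q (insert e1 D)" "e2 \<notin> insert e1 D"
    using co_events_sequential_extension[OF e1 e2 \<open>e1 \<noteq> e2\<close> co] by blast
  note first = mark_insert_event[OF D(1) e1 D(2)] and second = mark_insert_event[OF D(4) e2 D(5)]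
  have "enabled N (fire N (mark Q hC D) (hE e1)) (hE e2)" using second(1) first(2) by simp
  then show "tar N M0 (hE e1) (hE e2)"
    unfolding tar_def using mark_reachable[OF D(1)] first(1) by blast
  show "postT N (hE e1) \<inter> preT N (hE e2) = {}"
  proof (rule ccontr)
    assume "postT N (hE e1) \<inter> preT N (hE e2) \<noteq> {}"
    then obtain p where "p \<in> postT N (hE e1)" "p \<in> preT N (hE e2)" by blast
    then obtain b1 b2 where b: "b1 \<in> postE Q e1" "b2 \<in> preE Q e2" "hC b1 = hC b2"
      using bij_betw_postE[OF e1] bij_betw_preE[OF e2] unfolding bij_betw_def by (metis imageE)
    \<comment> \<open>both conditions belong to the cut reached after \<open>e1\<close>, where labels are injective\<close>
    have "b1 \<in> cut Q (insert e1 D)"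
      using cut_insert D(1-3) b(1) by (simp add: fconf_def)
    then have "b1 = b2" using inj_onD[OF inj_on_cut[OF D(4)]] b D(5) by blast
    then have "causal Q (Inr e1) (Inr e2)" using b causal_via_cond by (simp add: preE_def postE_def)
    then show False using co by (simp add: co_def)
  qed
qed

lemma tar_prefix_co_events:
  assumes adequate: "adequate_order Q hC hE R"
    and tar: "tar N M0 t1 t2" and disjoint: "postT N t1 \<inter> preT N t2 = {}"
  obtains e1 e2 where "e1 \<in> prefix_events Q hC R" "e2 \<in> prefix_events Q hC R" "e1 \<noteq> e2"
    "co Q (Inr e1) (Inr e2)" "hE e1 = t1" "hE e2 = t2"
proof -
  obtain Ms where Ms: "Ms \<in> reach N M0" "enabled N Ms t1" "enabled N Ms t2"
      "preT N t1 \<inter> preT N t2 = {}"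
    using one_safe_tar_disjoint_enabled[OF one_safe tar disjoint] by blast
  obtain C where C: "fconf Q C" "mark Q hC C = Ms" and cutoff_free: "\<forall>e\<in>C. \<not> cutoff Q hC R e"
    using reachable_cutoff_free_configuration[OF adequate Ms(1)] by blast
  obtain e1 where e1: "e1 \<in> events Q" "hE e1 = t1" "preE Q e1 = {b \<in> cut Q C. hC b \<in> preT N t1}"
    using enabled_transition_event[OF C(1)] Ms(2) C(2) by blast
  obtain e2 where e2: "e2 \<in> events Q" "hE e2 = t2" "preE Q e2 = {b \<in> cut Q C. hC b \<in> preT N t2}"
    using enabled_transition_event[OF C(1)] Ms(3) C(2) by blast
  have conf: "configuration Q C" using C(1) by (simp add: fconf_def)
  have pre: "preE Q e1 \<subseteq> cut Q C" "preE Q e2 \<subseteq> cut Q C" using e1(3) e2(3) by blast+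
  have "preE Q e1 \<inter> preE Q e2 = {}" using e1(3) e2(3) Ms(4) by blast
  note co = enabled_events_co[OF conf e1(1) e2(1) preE_nonempty[OF e1(1)] preE_nonempty[OF e2(1)]
      pre this]
  \<comment> \<open>the causal past of an event enabled at \<open>C\<close> lies in \<open>C\<close>, which contains no cut-off event\<close>
  have "e \<in> prefix_events Q hC R" if "e \<in> events Q" "preE Q e \<subseteq> cut Q C" for e
    using that past_in_configuration[OF conf] cutoff_free by (auto simp: prefix_events_def)
  then show thesis using that co e1 e2 pre by blast
qed

end

theorem proposition4:
  fixes N :: "('p,'t) pnet" and M0 :: "'p marking"
    and Q :: "('b,'e) onet" and hC :: "'b \<Rightarrow> 'p" and hE :: "'e \<Rightarrow> 't"
    and R :: "'e set \<Rightarrow> 'e set \<Rightarrow> bool" and t1 t2 :: 't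
  assumes "net_system N M0" and "one_safe N M0"
    and "is_unfolding N M0 Q hC hE" and "adequate_order Q hC hE R"
    and "t1 \<in> trans N" and "t2 \<in> trans N"
  shows "(tar N M0 t1 t2 \<and> postT N t1 \<inter> preT N t2 = {}) \<longleftrightarrow>
         (\<exists>e1 \<in> events (prefix_net Q hC R). \<exists>e2 \<in> events (prefix_net Q hC R).
            e1 \<noteq> e2 \<and> co (prefix_net Q hC R) (Inr e1) (Inr e2) \<and> hE e1 = t1 \<and> hE e2 = t2)"
proof -
  interpret safe_unfolding N M0 Q hC hE using assms(1-3) by unfold_locales
  have prefix_subset: "prefix_events Q hC R \<subseteq> events Q" unfolding prefix_events_def by blast
  have "(tar N M0 t1 t2 \<and> postT N t1 \<inter> preT N t2 = {}) \<longleftrightarrow>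
      (\<exists>e1 \<in> prefix_events Q hC R. \<exists>e2 \<in> prefix_events Q hC R.
        e1 \<noteq> e2 \<and> co Q (Inr e1) (Inr e2) \<and> hE e1 = t1 \<and> hE e2 = t2)"
    (is "?adjacent \<longleftrightarrow> ?concurrent")
  proof
    assume ?adjacent
    then obtain e1 e2 where "e1 \<in> prefix_events Q hC R" "e2 \<in> prefix_events Q hC R" "e1 \<noteq> e2"
        "co Q (Inr e1) (Inr e2)" "hE e1 = t1" "hE e2 = t2"
      using tar_prefix_co_events[OF assms(4)] by blast
    then show ?concurrent by blast
  next
    assume ?concurrent
    then show ?adjacent using co_events_tar prefix_subset by blast
  qed
  also have "?concurrent \<longleftrightarrow> (\<exists>e1 \<in> events (prefix_net Q hC R). \<exists>e2 \<in> events (prefix_net Q hC R).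
      e1 \<noteq> e2 \<and> co (prefix_net Q hC R) (Inr e1) (Inr e2) \<and> hE e1 = t1 \<and> hE e2 = t2)"
    by (rule concurrent_prefix_events_iff[symmetric])
  finally show ?thesis .
qed

end
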